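(* Fix integers $1\le L\le D\le K$. The capacity of the JPLT-II problem (single-server private linear transformation with joint privacy under Model II) with $K$ messages, demand support size $D$ and demand dimension $L$ equals $\dfrac{L}{K-D+L}$. That is, every JPLT-II protocol, over any field $\mathbb{F}_q$ and any message length $N$, has rate at most $L/(K-D+L)$, and for every prime power $q\ge K$ there is a JPLT-II protocol achieving rate exactly $L/(K-D+L)$.
   Context: Setup. Let $q$ be a prime power, $N\ge 1$ an integer, $B=N\log_2 q$, and $1\le L\le D\le K$ integers. Let $\mathbb{W}$ be the set of all $D$-element subsets of $[K]=\{1,\dots,K\}$. Let $\mathbb{V}_I$ be the set of $L\times D$ matrices over $\mathbb{F}_q$ that are MDS (every $L\times L$ submatrix is invertible), and $\mathbb{V}_{II}$ the set of $L\times D$ matrices over $\mathbb{F}_q$ of rank $L$. A server stores messages $X_1,\dots,X_K\in\mathbb{F}_q^N$ (row vectors), which are independent and uniformly distributed; $X$ denotes the $K\times N$ matrix with rows $X_1,\dots,X_K$, and for $S\subseteq[K]$, $X_S$ is the submatrix of rows indexed by $S$ (in increasing order). For $W\in\mathbb{W}$ and an $L\times D$ matrix $V$, the demand is $Z^{[W,V]}=VX_W=UX$, where the global coefficient matrix $U$ is the $L\times K$ matrix whose columns indexed by $W$ (in increasing order) are the columns of $V$ and whose other columns are zero. The demand support $W$ is uniform on $\mathbb{W}$; the coefficient matrix $V$ is uniform on $\mathbb{V}_I$ (Model I) or on $\mathbb{V}_{II}$ (Model II); $W,V,X$ are mutually independent. The server knows $K,D,L$ and these distributions but not the realizations of $W,V$.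 Protocol. The user draws private randomness $R$ independent of $(W,V,X)$ and sends a query $Q=Q^{[W,V]}$ that is a function of $(W,V,R)$; the server returns an answer $A=A^{[W,V]}$ that is a deterministic function of $(Q,X)$. Recoverability: $H(Z^{[W,V]}\mid A,Q,W,V)=0$. Joint privacy: for every realization $\mathrm{Q}$ of the query with positive probability and every $\tilde W\in\mathbb{W}$, $\Pr(W=\tilde W\mid Q=\mathrm{Q})=1/\binom{K}{D}$. A JPLT-I (resp. JPLT-II) protocol is a protocol satisfying recoverability and joint privacy under Model I (resp. Model II). The rate of a protocol is $H(Z^{[W,V]})/H(A)=LB/H(A)$. The capacity is the supremum of rates over all such protocols and all field sizes $q$ (for fixed $K,D,L$). *)

theory Defs
  imports "HOL-Probability.Probability"
begin

(* Matrices are functions nat => nat => 'a, 0-indexed, zero outside their dimensions. *)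

definition supported :: "nat \<Rightarrow> nat \<Rightarrow> (nat \<Rightarrow> nat \<Rightarrow> 'a::zero) \<Rightarrow> bool" where
  "supported m n M \<longleftrightarrow> (\<forall>i j. \<not> (i < m \<and> j < n) \<longrightarrow> M i j = 0)"

definition mats :: "nat \<Rightarrow> nat \<Rightarrow> (nat \<Rightarrow> nat \<Rightarrow> 'a::zero) set" where
  "mats m n = {M. supported m n M}"

definition full_row_rank :: "nat \<Rightarrow> nat \<Rightarrow> (nat \<Rightarrow> nat \<Rightarrow> 'a::field) \<Rightarrow> bool" where
  "full_row_rank L D V \<longleftrightarrow>
     (\<forall>c :: nat \<Rightarrow> 'a. (\<forall>j<D. (\<Sum>i<L. c i * V i j) = 0) \<longrightarrow> (\<forall>i<L. c i = 0))"

definition V_II :: "nat \<Rightarrow> nat \<Rightarrow> (nat \<Rightarrow> nat \<Rightarrow> 'a::field) set" where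
  "V_II L D = {V \<in> mats L D. full_row_rank L D V}"

definition supports :: "nat \<Rightarrow> nat \<Rightarrow> nat set set" where
  "supports K D = {S. S \<subseteq> {0..<K} \<and> card S = D}"

(* demand Z = V X_W  (L x N), rows of X_W in increasing index order *)
definition demand :: "nat \<Rightarrow> nat \<Rightarrow> nat \<Rightarrow> nat set \<Rightarrow> (nat \<Rightarrow> nat \<Rightarrow> 'a::field)
    \<Rightarrow> (nat \<Rightarrow> nat \<Rightarrow> 'a) \<Rightarrow> (nat \<Rightarrow> nat \<Rightarrow> 'a)" where
  "demand L D N W V X = (\<lambda>i n. if i < L \<and> n < N then
      (\<Sum>j<D. V i j * X (sorted_list_of_set W ! j) n) else 0)"

definition entropy_pmf :: "'a pmf \<Rightarrow> ennreal" where
  "entropy_pmf p = (\<integral>\<^sup>+ x. ennreal (- pmf p x * log 2 (pmf p x)) \<partial>count_space UNIV)"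

(* conditional entropy H(Z | Y) for a joint distribution J of (Z, Y):
   sum over (z,y) of p(z,y) log2 (p(y) / p(z,y)) *)
definition cond_entropy_pmf :: "('a \<times> 'b) pmf \<Rightarrow> ennreal" where
  "cond_entropy_pmf J = (\<integral>\<^sup>+ zy. ennreal (pmf J zy *
       log 2 (pmf (map_pmf snd J) (snd zy) / pmf J zy)) \<partial>count_space UNIV)"

definition omega_II :: "nat \<Rightarrow> nat \<Rightarrow> nat \<Rightarrow> nat \<Rightarrow> 'r pmf
    \<Rightarrow> (nat set \<times> (nat \<Rightarrow> nat \<Rightarrow> 'a::{finite,field}) \<times> 'r \<times> (nat \<Rightarrow> nat \<Rightarrow> 'a)) pmf" where
  "omega_II K D L N \<rho> =
     bind_pmf (pmf_of_set (supports K D)) (\<lambda>W.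
     bind_pmf (pmf_of_set (V_II L D)) (\<lambda>V.
     bind_pmf \<rho> (\<lambda>R.
     bind_pmf (pmf_of_set (mats K N)) (\<lambda>X.
     return_pmf (W, V, R, X)))))"

(* A protocol: private randomness R ~ rho, query Q = qf W V R, answer A = af Q X *)
definition JPLT_II_protocol :: "nat \<Rightarrow> nat \<Rightarrow> nat \<Rightarrow> nat \<Rightarrow> 'r pmf
    \<Rightarrow> (nat set \<Rightarrow> (nat \<Rightarrow> nat \<Rightarrow> 'a::{finite,field}) \<Rightarrow> 'r \<Rightarrow> 'q)
    \<Rightarrow> ('q \<Rightarrow> (nat \<Rightarrow> nat \<Rightarrow> 'a) \<Rightarrow> 'b) \<Rightarrow> bool" where
  "JPLT_II_protocol K D L N \<rho> qf af \<longleftrightarrow>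
     (let \<Omega> = omega_II K D L N \<rho> in
       \<comment> \<open>recoverability: H(Z | A, Q, W, V) = 0\<close>
       cond_entropy_pmf (map_pmf (\<lambda>(W, V, R, X).
           (demand L D N W V X, af (qf W V R) X, qf W V R, W, V)) \<Omega>) = 0
     \<and> \<comment> \<open>joint privacy\<close>
       (\<forall>q. measure_pmf.prob \<Omega> {(W, V, R, X). qf W V R = q} > 0 \<longrightarrow>
          (\<forall>W' \<in> supports K D.
             measure_pmf.prob \<Omega> {(W, V, R, X). W = W' \<and> qf W V R = q}
               / measure_pmf.prob \<Omega> {(W, V, R, X). qf W V R = q}
             = 1 / real (K choose D))))"

(* rate = L B / H(A), with B = N log2 q *)
definition JPLT_II_rate :: "nat \<Rightarrow> nat \<Rightarrow> nat \<Rightarrow> nat \<Rightarrow> 'r pmf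
    \<Rightarrow> (nat set \<Rightarrow> (nat \<Rightarrow> nat \<Rightarrow> 'a::{finite,field}) \<Rightarrow> 'r \<Rightarrow> 'q)
    \<Rightarrow> ('q \<Rightarrow> (nat \<Rightarrow> nat \<Rightarrow> 'a) \<Rightarrow> 'b) \<Rightarrow> ennreal" where
  "JPLT_II_rate K D L N \<rho> qf af =
     ennreal (real L * (real N * log 2 (real CARD('a))))
     / entropy_pmf (map_pmf (\<lambda>(W, V, R, X). af (qf W V R) X) (omega_II K D L N \<rho>))"

end

theory Submission
  imports Defs "HOL-Library.Function_Algebras" "HOL-Computational_Algebra.Polynomial"
begin

text \<open>Converse. Fix a realisation of the query. By joint privacy it occurs with every support \<open>W\<close>,
  together with some coefficient matrix \<open>V\<^sub>W\<close> of rank \<open>L\<close>, and by recoverability the answer then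
  determines every demand \<open>V\<^sub>W X\<^sub>W\<close>. So two message matrices with the same answer differ, column
  by column, by a vector killed by all the \<open>V\<^sub>W\<close>. These vectors form a space of dimension at most
  \<open>D - L\<close>: otherwise a support containing \<open>D\<close> of its pivots would carry a subspace of dimension
  \<open>> D - L\<close> inside the kernel of \<open>V\<^sub>W\<close>. Hence each answer value has probability at most
  \<open>1 / q ^ ((K - D + L) N)\<close>, and \<open>H(A) \<ge> (K - D + L) N log q\<close>.

  Achievability, with \<open>N = 1\<close> and distinct points \<open>\<alpha> 0, \<dots>, \<alpha> (K - 1)\<close>: the user sends the
  Vandermonde matrix of the points \<open>\<alpha> w\<close>, \<open>w \<in> W\<close>, times \<open>V\<^sup>T\<close>, which is uniform on the \<open>D \<times> L\<close>
  matrices of full column rank whatever \<open>W\<close> is. The server interpolates the first \<open>D\<close> messages by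
  a polynomial \<open>P\<close> of degree \<open>< D\<close> and returns \<open>V\<close> applied to the values \<open>P (\<alpha> w)\<close>, \<open>w \<in> W\<close>,
  together with the \<open>K - D\<close> residuals \<open>X\<^sub>k - P (\<alpha> k)\<close>, from which \<open>V X\<^sub>W\<close> is read off.\<close>

section \<open>Dimension counting over finite fields\<close>

definition vectors :: "nat \<Rightarrow> (nat \<Rightarrow> 'a::zero) set" where
  "vectors n = {x. \<forall>k\<ge>n. x k = 0}"

definition is_subspace :: "(nat \<Rightarrow> 'a::field) set \<Rightarrow> bool" where
  "is_subspace E \<longleftrightarrow>
     0 \<in> E \<and> (\<forall>x\<in>E. \<forall>y\<in>E. x + y \<in> E) \<and> (\<forall>c. \<forall>x\<in>E. (\<lambda>k. c * x k) \<in> E)"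

text \<open>Pivot sets stand in for bases: the cardinality of a pivot set is the dimension of \<open>E\<close>.\<close>

definition pivot_set :: "(nat \<Rightarrow> 'a) set \<Rightarrow> nat set \<Rightarrow> bool" where
  "pivot_set E P \<longleftrightarrow>
     (\<forall>g. \<exists>x\<in>E. \<forall>p\<in>P. x p = g p) \<and> (\<forall>x\<in>E. \<forall>y\<in>E. (\<forall>p\<in>P. x p = y p) \<longrightarrow> x = y)"

lemma pivot_setE:
  assumes "pivot_set E P"
  obtains x where "x \<in> E" "\<And>p. p \<in> P \<Longrightarrow> x p = g p"
  using assms unfolding pivot_set_def by blast

lemma pivot_set_eqI:
  "pivot_set E P \<Longrightarrow> x \<in> E \<Longrightarrow> y \<in> E \<Longrightarrow> (\<And>p. p \<in> P \<Longrightarrow> x p = y p) \<Longrightarrow> x = y"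
  unfolding pivot_set_def by blast

lemma is_subspace_zero: "is_subspace E \<Longrightarrow> 0 \<in> E"
  unfolding is_subspace_def by blast

lemma is_subspace_add: "is_subspace E \<Longrightarrow> x \<in> E \<Longrightarrow> y \<in> E \<Longrightarrow> x + y \<in> E"
  unfolding is_subspace_def by blast

lemma is_subspace_scale: "is_subspace E \<Longrightarrow> x \<in> E \<Longrightarrow> (\<lambda>k. c * x k) \<in> E"
  unfolding is_subspace_def by blast

lemma is_subspace_diff:
  assumes "is_subspace E" "x \<in> E" "y \<in> E"
  shows "x - y \<in> E"
proof -
  have "x + (\<lambda>k. (-1) * y k) \<in> E"
    using assms is_subspace_add is_subspace_scale by blast
  moreover have "x + (\<lambda>k. (-1) * y k) = x - y" by (auto simp: fun_eq_iff)
  ultimately show ?thesis by simp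
qed

lemma is_subspace_solutions:
  "is_subspace {x \<in> vectors n. \<forall>i. P i \<longrightarrow> (\<Sum>j<m. a i j * x (\<sigma> i j)) = (0::'a::field)}"
proof -
  have "(\<Sum>j<m. a i j * (x + y) (\<sigma> i j))
      = (\<Sum>j<m. a i j * x (\<sigma> i j)) + (\<Sum>j<m. a i j * y (\<sigma> i j))" for i x y
    by (simp add: distrib_left sum.distrib)
  moreover have "(\<Sum>j<m. a i j * (c * x (\<sigma> i j))) = c * (\<Sum>j<m. a i j * x (\<sigma> i j))" for i c x
    by (simp add: sum_distrib_left mult.left_commute)
  ultimately show ?thesis unfolding is_subspace_def vectors_def by auto
qed

lemma is_subspace_linear_image:
  fixes f :: "(nat \<Rightarrow> 'a::field) \<Rightarrow> nat \<Rightarrow> 'a"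
  assumes add: "\<And>x y. f (x + y) = f x + f y"
    and scale: "\<And>c x. f (\<lambda>k. c * x k) = (\<lambda>k. c * f x k)"
  shows "is_subspace (f ` vectors n)"
  unfolding is_subspace_def
proof (intro conjI ballI allI)
  have "f 0 = 0" using scale[of 0 0] by (simp add: zero_fun_def)
  then show "0 \<in> f ` vectors n" by (force simp: vectors_def)
next
  fix x y assume "x \<in> f ` vectors n" "y \<in> f ` vectors n"
  then obtain a b where ab: "a \<in> vectors n" "b \<in> vectors n" "x = f a" "y = f b" by blast
  have "a + b \<in> vectors n" using ab(1,2) unfolding vectors_def by simp
  then show "x + y \<in> f ` vectors n" unfolding ab(3,4) add[symmetric] by (rule imageI)
next
  fix c x assume "x \<in> f ` vectors n"
  then obtain a where a: "a \<in> vectors n" "x = f a" by blast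
  have "(\<lambda>k. c * a k) \<in> vectors n" using a(1) unfolding vectors_def by simp
  then show "(\<lambda>k. c * x k) \<in> f ` vectors n" unfolding a(2) scale[symmetric] by (rule imageI)
qed

lemma pivot_set_exists:
  fixes E :: "(nat \<Rightarrow> 'a::field) set"
  assumes "is_subspace E" "E \<subseteq> vectors n"
  shows "\<exists>P \<subseteq> {0..<n}. pivot_set E P"
  using assms
proof (induction n arbitrary: E)
  case 0
  have "E = {0}"
    using 0 is_subspace_zero[OF 0(1)] unfolding vectors_def by (auto simp: fun_eq_iff)
  then have "pivot_set E {}" unfolding pivot_set_def by simp
  then show ?case by blast
next
  case (Suc n)
  define E0 where "E0 = {x\<in>E. x n = 0}"
  have "is_subspace E0" using Suc.prems(1) unfolding E0_def is_subspace_def by auto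
  moreover have "E0 \<subseteq> vectors n"
  proof
    fix x assume x: "x \<in> E0"
    show "x \<in> vectors n" unfolding vectors_def
    proof (intro CollectI allI impI)
      fix k assume "n \<le> k"
      then show "x k = 0" using x Suc.prems(2) by (cases "k = n") (auto simp: E0_def vectors_def)
    qed
  qed
  ultimately obtain P0 where P0: "P0 \<subseteq> {0..<n}" "pivot_set E0 P0"
    using Suc.IH by blast
  show ?case
  proof (cases "\<forall>x\<in>E. x n = 0")
    case True
    then have "E0 = E" unfolding E0_def by auto
    then show ?thesis using P0 by (intro exI[of _ P0]) auto
  next
    case False
    then obtain u0 where u0: "u0 \<in> E" "u0 n \<noteq> 0" by auto
    define u where "u = (\<lambda>k. inverse (u0 n) * u0 k)"
    have u: "u \<in> E" "u n = 1"
      using u0 is_subspace_scale[OF Suc.prems(1)] unfolding u_def by auto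
    have "\<exists>x\<in>E. \<forall>p\<in>insert n P0. x p = g p" for g
    proof -
      obtain e where e: "e \<in> E0" "\<And>p. p \<in> P0 \<Longrightarrow> e p = g p - g n * u p"
        using pivot_setE[OF P0(2), where g = "\<lambda>k. g k - g n * u k"] by blast
      have "e + (\<lambda>k. g n * u k) \<in> E"
        using e u is_subspace_add[OF Suc.prems(1)] is_subspace_scale[OF Suc.prems(1)]
        unfolding E0_def by blast
      moreover have "\<forall>p\<in>insert n P0. (e + (\<lambda>k. g n * u k)) p = g p"
        using e u unfolding E0_def by auto
      ultimately show ?thesis by blast
    qed
    moreover have "x = y" if "x \<in> E" "y \<in> E" "\<forall>p\<in>insert n P0. x p = y p" for x y
    proof -
      have "y - x \<in> E0"
        using is_subspace_diff[OF Suc.prems(1)] that unfolding E0_def by auto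
      then have "y - x = 0"
        by (rule pivot_set_eqI[OF P0(2) _ is_subspace_zero[OF \<open>is_subspace E0\<close>]])
           (use that in auto)
      then show "x = y" by simp
    qed
    ultimately have "pivot_set E (insert n P0)" unfolding pivot_set_def by blast
    then show ?thesis using P0(1) by (intro exI[of _ "insert n P0"]) auto
  qed
qed

lemma card_pivot_set:
  fixes E :: "(nat \<Rightarrow> 'a::finite) set"
  assumes "finite P" and "pivot_set E P"
  shows "finite E" and "card E = CARD('a) ^ card P"
proof -
  have bij: "bij_betw (\<lambda>x. restrict x P) E (PiE P (\<lambda>_. UNIV))"
  proof (rule bij_betwI')
    fix x y assume xy: "x \<in> E" "y \<in> E"
    show "(restrict x P = restrict y P) = (x = y)"
    proof
      assume "restrict x P = restrict y P"
      then have "x p = y p" if "p \<in> P" for p using that by (metis restrict_apply')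
      then show "x = y" using pivot_set_eqI[OF assms(2) xy] by blast
    qed simp
  next
    fix g :: "nat \<Rightarrow> 'a" assume g: "g \<in> PiE P (\<lambda>_. UNIV)"
    obtain x where "x \<in> E" "\<And>p. p \<in> P \<Longrightarrow> x p = g p"
      using pivot_setE[OF assms(2), where g = g] by blast
    moreover from this have "restrict x P = g"
      using g by (auto simp: fun_eq_iff PiE_def extensional_def)
    ultimately show "\<exists>x\<in>E. g = restrict x P" by blast
  qed simp
  have "finite (PiE P (\<lambda>_. UNIV :: 'a set))" using assms(1) by (simp add: finite_PiE)
  then show "finite E" using bij_betw_finite[OF bij] by simp
  show "card E = CARD('a) ^ card P"
    using bij_betw_same_card[OF bij] assms(1) by (simp add: card_PiE)
qed

lemma pivot_set_vectors: "pivot_set (vectors n) {0..<n}"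
  unfolding pivot_set_def
proof (intro conjI allI ballI impI)
  fix g :: "nat \<Rightarrow> 'a"
  show "\<exists>x\<in>vectors n. \<forall>p\<in>{0..<n}. x p = g p"
    by (rule bexI[of _ "\<lambda>k. if k < n then g k else 0"]) (auto simp: vectors_def)
next
  fix x y :: "nat \<Rightarrow> 'a" assume xy: "x \<in> vectors n" "y \<in> vectors n" "\<forall>p\<in>{0..<n}. x p = y p"
  show "x = y"
  proof
    fix k show "x k = y k" using xy unfolding vectors_def by (cases "k < n") auto
  qed
qed

lemma finite_vectors: "finite (vectors n :: (nat \<Rightarrow> 'a::{finite,zero}) set)"
  using card_pivot_set(1)[OF _ pivot_set_vectors] by simp

lemma card_vectors: "card (vectors n :: (nat \<Rightarrow> 'a::{finite,zero}) set) = CARD('a) ^ n"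
  using card_pivot_set(2)[OF _ pivot_set_vectors] by simp

lemma pivot_set_vanishing_outside:
  assumes "pivot_set E P" and "P' \<subseteq> P"
  shows "pivot_set {x\<in>E. \<forall>p\<in>P - P'. x p = 0} P'"
  unfolding pivot_set_def
proof (intro conjI allI ballI impI)
  fix g
  obtain x where "x \<in> E" "\<And>p. p \<in> P \<Longrightarrow> x p = (if p \<in> P' then g p else 0)"
    using pivot_setE[OF assms(1), where g = "\<lambda>p. if p \<in> P' then g p else 0"] by blast
  then show "\<exists>x\<in>{x\<in>E. \<forall>p\<in>P - P'. x p = 0}. \<forall>p\<in>P'. x p = g p"
    using assms(2) by (intro bexI[of _ x]) auto
next
  fix x y assume xy: "x \<in> {x\<in>E. \<forall>p\<in>P - P'. x p = 0}" "y \<in> {x\<in>E. \<forall>p\<in>P - P'. x p = 0}"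
    "\<forall>p\<in>P'. x p = y p"
  show "x = y"
  proof (rule pivot_set_eqI[OF assms(1)])
    show "x \<in> E" "y \<in> E" using xy by auto
    fix p assume "p \<in> P"
    then show "x p = y p" using xy by (cases "p \<in> P'") auto
  qed
qed

lemma card_field_ge_2: "2 \<le> CARD('a::{finite,field})"
proof -
  have "card {0::'a, 1} \<le> CARD('a)" by (intro card_mono) simp_all
  then show ?thesis by simp
qed

lemma finite_mats: "finite (mats m n :: (nat \<Rightarrow> nat \<Rightarrow> 'a::{finite,zero}) set)"
  and card_mats: "card (mats m n :: (nat \<Rightarrow> nat \<Rightarrow> 'a) set) = CARD('a) ^ (m * n)"
proof -
  let ?S = "{0..<m} \<times> {0..<n}"
  have bij: "bij_betw (\<lambda>M. restrict (case_prod M) ?S) (mats m n :: (nat \<Rightarrow> nat \<Rightarrow> 'a) set)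
      (PiE ?S (\<lambda>_. UNIV))"
  proof (rule bij_betwI')
    fix x y :: "nat \<Rightarrow> nat \<Rightarrow> 'a" assume xy: "x \<in> mats m n" "y \<in> mats m n"
    show "(restrict (case_prod x) ?S = restrict (case_prod y) ?S) = (x = y)"
    proof
      assume r: "restrict (case_prod x) ?S = restrict (case_prod y) ?S"
      show "x = y"
      proof (intro ext)
        fix i j
        show "x i j = y i j"
          using fun_cong[OF r, of "(i, j)"] xy unfolding mats_def supported_def
          by (cases "i < m \<and> j < n") auto
      qed
    qed simp
  next
    fix g assume g: "g \<in> PiE ?S (\<lambda>_. UNIV :: 'a set)"
    define x where "x = (\<lambda>i j. if i < m \<and> j < n then g (i, j) else (0::'a))"
    have "x \<in> mats m n" unfolding x_def mats_def supported_def by auto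
    moreover have "restrict (case_prod x) ?S = g"
      using g by (auto simp: fun_eq_iff PiE_def extensional_def x_def)
    ultimately show "\<exists>x\<in>mats m n. g = restrict (case_prod x) ?S" by metis
  qed simp
  show "finite (mats m n :: (nat \<Rightarrow> nat \<Rightarrow> 'a) set)"
    using bij_betw_finite[OF bij] by (simp add: finite_PiE)
  show "card (mats m n :: (nat \<Rightarrow> nat \<Rightarrow> 'a) set) = CARD('a) ^ (m * n)"
    using bij_betw_same_card[OF bij] by (simp add: card_PiE card_cartesian_product)
qed

lemma card_orthogonal_le:
  fixes N :: "(nat \<Rightarrow> 'a::{finite,field}) set"
  assumes R: "pivot_set R P" "P \<subseteq> {0..<n}"
    and N: "N \<subseteq> vectors n" "\<And>x y. x \<in> N \<Longrightarrow> y \<in> N \<Longrightarrow> x - y \<in> N"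
    and orth: "\<And>r x. r \<in> R \<Longrightarrow> x \<in> N \<Longrightarrow> (\<Sum>j<n. r j * x j) = 0"
  shows "card N \<le> CARD('a) ^ (n - card P)"
proof -
  define C where "C = {0..<n} - P"
  have "inj_on (\<lambda>x. restrict x C) N"
  proof (rule inj_onI)
    fix x y assume xy: "x \<in> N" "y \<in> N" "restrict x C = restrict y C"
    define d where "d = x - y"
    have dN: "d \<in> N" using N(2)[OF xy(1,2)] unfolding d_def .
    have dC: "d j = 0" if "j \<in> C" for j
      using fun_cong[OF xy(3), of j] that unfolding d_def by simp
    text \<open>Pairing \<open>d\<close> with the element of \<open>R\<close> that is the unit vector at \<open>p\<close> on the pivots
      picks out \<open>d p\<close>, because \<open>d\<close> vanishes off the pivots.\<close>
    have dP: "d p = 0" if p: "p \<in> P" for p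
    proof -
      obtain r where r: "r \<in> R" "\<And>p'. p' \<in> P \<Longrightarrow> r p' = (if p' = p then 1 else 0)"
        using pivot_setE[OF R(1), where g = "\<lambda>p'. if p' = p then 1 else 0"] by blast
      have "(\<Sum>j<n. r j * d j) = (\<Sum>j<n. if j = p then d j else 0)"
      proof (rule sum.cong)
        fix j assume "j \<in> {..<n}"
        then show "r j * d j = (if j = p then d j else 0)"
          using r(2) dC p unfolding C_def by (cases "j \<in> P") auto
      qed simp
      also have "\<dots> = d p" using p R(2) by auto
      finally show ?thesis using orth[OF r(1) dN] by simp
    qed
    have "d k = 0" for k
      using dP dC dN N(1) unfolding C_def vectors_def by (cases "k < n") auto
    then show "x = y" unfolding d_def by (simp add: fun_eq_iff)
  qed
  moreover have "(\<lambda>x. restrict x C) ` N \<subseteq> PiE C (\<lambda>_. UNIV :: 'a set)" by auto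
  moreover have "finite C" unfolding C_def by simp
  ultimately have "card N \<le> CARD('a) ^ card C"
    using card_inj_on_le[of _ N "PiE C (\<lambda>_. UNIV :: 'a set)"] by (simp add: finite_PiE card_PiE)
  also have "card C = n - card P"
    unfolding C_def using R(2) by (simp add: card_Diff_subset finite_subset)
  finally show ?thesis .
qed

lemma card_kernel_le:
  fixes V :: "nat \<Rightarrow> nat \<Rightarrow> 'a::{finite,field}"
  assumes "V \<in> V_II L D"
  shows "card {x \<in> vectors D. \<forall>i<L. (\<Sum>j<D. V i j * x j) = 0} \<le> CARD('a) ^ (D - L)"
proof -
  have V: "V \<in> mats L D" and rank: "full_row_rank L D V"
    using assms unfolding V_II_def by auto
  define comb where "comb c = (\<lambda>j. \<Sum>i<L. c i * V i j)" for c :: "nat \<Rightarrow> 'a"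
  define R where "R = comb ` vectors L"
  define Null where "Null = {x \<in> vectors D. \<forall>i<L. (\<Sum>j<D. V i j * x j) = 0}"
  have "is_subspace R"
    unfolding R_def by (rule is_subspace_linear_image)
      (simp_all add: comb_def fun_eq_iff distrib_right sum.distrib sum_distrib_left mult.assoc)
  moreover have "R \<subseteq> vectors D"
    using V unfolding R_def comb_def vectors_def mats_def supported_def by auto
  ultimately obtain P where P: "P \<subseteq> {0..<D}" "pivot_set R P"
    using pivot_set_exists by blast
  have "inj_on comb (vectors L)"
  proof (rule inj_onI)
    fix c d assume cd: "c \<in> vectors L" "d \<in> vectors L" "comb c = comb d"
    have "(\<Sum>i<L. (c i - d i) * V i j) = comb c j - comb d j" for j
      unfolding comb_def by (simp add: left_diff_distrib sum_subtractf)
    then have "c i - d i = 0" if "i < L" for i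
      using rank[unfolded full_row_rank_def, rule_format, where c = "\<lambda>i. c i - d i"] that cd(3)
      by simp
    then have "c i = d i" for i
      using cd(1,2) unfolding vectors_def by (cases "i < L") auto
    then show "c = d" by (simp add: fun_eq_iff)
  qed
  then have "card R = CARD('a) ^ L" unfolding R_def by (simp add: card_image card_vectors)
  moreover have "card R = CARD('a) ^ card P"
    using card_pivot_set(2)[OF finite_subset[OF P(1)] P(2)] by simp
  ultimately have "card P = L" using card_field_ge_2[where 'a='a] by simp
  have orth: "(\<Sum>j<D. r j * x j) = 0" if r: "r \<in> R" and x: "x \<in> Null" for r x
  proof -
    obtain c where r: "r = comb c" using r unfolding R_def by blast
    have "(\<Sum>j<D. r j * x j) = (\<Sum>j<D. \<Sum>i<L. c i * (V i j * x j))"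
      unfolding r comb_def by (simp add: sum_distrib_right mult.assoc)
    also have "\<dots> = (\<Sum>i<L. c i * (\<Sum>j<D. V i j * x j))"
      by (subst sum.swap) (simp add: sum_distrib_left)
    also have "\<dots> = 0" using x unfolding Null_def by simp
    finally show ?thesis .
  qed
  have "is_subspace Null"
    unfolding Null_def by (rule is_subspace_solutions[where P = "\<lambda>i. i < L" and \<sigma> = "\<lambda>i j. j"])
  have "card Null \<le> CARD('a) ^ (D - card P)"
    by (rule card_orthogonal_le[OF P(2,1) _ is_subspace_diff[OF \<open>is_subspace Null\<close>] orth])
       (auto simp: Null_def)
  then show ?thesis using \<open>card P = L\<close> unfolding Null_def by simp
qed

section \<open>The kernel common to all demands\<close>

lemma finite_supports: "finite (supports K D)"
  unfolding supports_def by (rule finite_subset[of _ "Pow {0..<K}"]) auto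

lemma card_supports: "card (supports K D) = K choose D"
  unfolding supports_def using n_subsets[of "{0..<K}" D] by simp

lemma supports_sorted_list:
  assumes "W \<in> supports K D"
  shows "finite W" "length (sorted_list_of_set W) = D" "set (sorted_list_of_set W) = W"
proof -
  show "finite W" using assms unfolding supports_def by (auto intro: finite_subset)
  then show "length (sorted_list_of_set W) = D" "set (sorted_list_of_set W) = W"
    using assms unfolding supports_def by auto
qed

lemma support_superset_exists:
  assumes "A \<subseteq> {0..<K}" "card A \<le> D" "D \<le> K"
  obtains W where "W \<in> supports K D" "A \<subseteq> W"
proof -
  have "finite A" using assms(1) finite_subset by blast
  then have "D - card A \<le> card ({0..<K} - A)" using assms(1,3) by (simp add: card_Diff_subset)
  then obtain B where B: "B \<subseteq> {0..<K} - A" "card B = D - card A"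
    by (metis obtain_subset_with_card_n)
  have "card (A \<union> B) = D"
    using B assms(2) \<open>finite A\<close> finite_subset[OF B(1)] by (subst card_Un_disjoint) auto
  then have "A \<union> B \<in> supports K D" using assms(1) B(1) unfolding supports_def by auto
  then show ?thesis using that by blast
qed

lemma supports_nonempty: "D \<le> K \<Longrightarrow> supports K D \<noteq> {}"
  using support_superset_exists[of "{}" K D] by auto

abbreviation nth_support :: "nat set \<Rightarrow> nat \<Rightarrow> nat" where
  "nth_support W j \<equiv> sorted_list_of_set W ! j"

text \<open>Differences of message columns that no demand with support \<open>W\<close> and coefficients \<open>Vs W\<close>
  can detect, whichever \<open>W\<close> is chosen.\<close>

definition common_demand_kernel ::
    "nat \<Rightarrow> nat \<Rightarrow> nat \<Rightarrow> (nat set \<Rightarrow> nat \<Rightarrow> nat \<Rightarrow> 'a::field) \<Rightarrow> (nat \<Rightarrow> 'a) set" where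
  "common_demand_kernel K D L Vs = {\<delta> \<in> vectors K. \<forall>W\<in>supports K D. \<forall>i<L.
     (\<Sum>j<D. Vs W i j * \<delta> (nth_support W j)) = 0}"

lemma is_subspace_common_demand_kernel: "is_subspace (common_demand_kernel K D L Vs)"
proof -
  have "common_demand_kernel K D L Vs = {\<delta> \<in> vectors K. \<forall>Wi. fst Wi \<in> supports K D \<and> snd Wi < L \<longrightarrow>
     (\<Sum>j<D. Vs (fst Wi) (snd Wi) j * \<delta> (nth_support (fst Wi) j)) = 0}"
    unfolding common_demand_kernel_def by auto
  then show ?thesis
    by (simp only: is_subspace_solutions[where a = "\<lambda>Wi. Vs (fst Wi) (snd Wi)"
        and \<sigma> = "\<lambda>Wi j. nth_support (fst Wi) j"])
qed

lemma card_common_demand_kernel_le: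
  fixes Vs :: "nat set \<Rightarrow> nat \<Rightarrow> nat \<Rightarrow> 'a::{finite,field}"
  assumes "1 \<le> L" "L \<le> D" "D \<le> K"
    and Vs: "\<And>W. W \<in> supports K D \<Longrightarrow> Vs W \<in> V_II L D"
  shows "card (common_demand_kernel K D L Vs) \<le> CARD('a) ^ (D - L)"
proof -
  have q: "1 < CARD('a)" using card_field_ge_2[where 'a='a] by linarith
  define E where "E = common_demand_kernel K D L Vs"
  have "is_subspace E" unfolding E_def by (rule is_subspace_common_demand_kernel)
  moreover have "E \<subseteq> vectors K" unfolding E_def common_demand_kernel_def by blast
  ultimately obtain P where P: "P \<subseteq> {0..<K}" "pivot_set E P"
    using pivot_set_exists by blast
  have finP: "finite P" using P(1) finite_subset by blast
  define t where "t = card P"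
  obtain P' where P': "P' \<subseteq> P" "card P' = min t D"
    using obtain_subset_with_card_n[of "min t D" P] unfolding t_def by auto
  obtain W where W: "W \<in> supports K D" "P' \<subseteq> W"
    using support_superset_exists[of P' K D] P P' assms(3) by auto
  define E' where "E' = {x\<in>E. \<forall>p\<in>P - P'. x p = 0}"
  have pivE': "pivot_set E' P'"
    unfolding E'_def by (rule pivot_set_vanishing_outside[OF P(2) P'(1)])
  have cardE': "card E' = CARD('a) ^ min t D"
    using card_pivot_set(2)[OF finite_subset[OF P'(1) finP] pivE'] unfolding P'(2) .
  define ws where "ws = sorted_list_of_set W"
  define \<psi> where "\<psi> \<delta> = (\<lambda>j. if j < D then \<delta> (ws ! j) else 0)" for \<delta> :: "nat \<Rightarrow> 'a"
  define Null where "Null = {x \<in> vectors D. \<forall>i<L. (\<Sum>j<D. Vs W i j * x j) = 0}"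
  have "\<psi> ` E' \<subseteq> Null"
  proof
    fix y assume "y \<in> \<psi> ` E'"
    then obtain \<delta> where \<delta>: "\<delta> \<in> E'" "y = \<psi> \<delta>" by blast
    have "\<forall>i<L. (\<Sum>j<D. Vs W i j * \<delta> (ws ! j)) = 0"
      using \<delta>(1) W(1) unfolding E'_def E_def common_demand_kernel_def ws_def by blast
    moreover have "(\<Sum>j<D. Vs W i j * y j) = (\<Sum>j<D. Vs W i j * \<delta> (ws ! j))" for i
      unfolding \<delta>(2) \<psi>_def by (intro sum.cong) auto
    moreover have "y \<in> vectors D" unfolding \<delta>(2) \<psi>_def vectors_def by simp
    ultimately show "y \<in> Null" unfolding Null_def by simp
  qed
  moreover have "inj_on \<psi> E'"
  proof (rule inj_onI)
    fix x y assume xy: "x \<in> E'" "y \<in> E'" "\<psi> x = \<psi> y"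
    show "x = y"
    proof (rule pivot_set_eqI[OF pivE' xy(1,2)])
      fix p assume "p \<in> P'"
      then have "p \<in> set ws" using W(2) supports_sorted_list(3)[OF W(1)] unfolding ws_def by blast
      then obtain j where "j < D" "ws ! j = p"
        using supports_sorted_list(2)[OF W(1)] unfolding ws_def in_set_conv_nth by auto
      then show "x p = y p" using fun_cong[OF xy(3), of j] unfolding \<psi>_def by simp
    qed
  qed
  moreover have "finite Null"
    unfolding Null_def by (rule finite_subset[OF _ finite_vectors]) blast
  ultimately have "card E' \<le> card Null" by (blast intro: card_inj_on_le)
  also have "\<dots> \<le> CARD('a) ^ (D - L)" unfolding Null_def by (rule card_kernel_le[OF Vs[OF W(1)]])
  finally have "min t D \<le> D - L" unfolding cardE' power_increasing_iff[OF q] .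
  then have "t \<le> D - L" using assms(1,2) by (simp add: min_def split: if_splits)
  then have "CARD('a) ^ t \<le> CARD('a) ^ (D - L)" unfolding power_increasing_iff[OF q] .
  then show ?thesis using card_pivot_set(2)[OF finP P(2)] unfolding E_def t_def by simp
qed

lemma demand_column_diff_in_common_kernel:
  assumes "X \<in> mats K N" "X' \<in> mats K N" "n < N"
    and same: "\<And>W. W \<in> supports K D \<Longrightarrow> demand L D N W (Vs W) X = demand L D N W (Vs W) X'"
  shows "(\<lambda>k. X k n - X' k n) \<in> common_demand_kernel K D L Vs"
  unfolding common_demand_kernel_def
proof (intro CollectI conjI ballI allI impI)
  show "(\<lambda>k. X k n - X' k n) \<in> vectors K"
    using assms(1,2) unfolding vectors_def mats_def supported_def by simp
  fix W i assume "W \<in> supports K D" "i < L"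
  then have "(\<Sum>j<D. Vs W i j * X (nth_support W j) n)
      = (\<Sum>j<D. Vs W i j * X' (nth_support W j) n)"
    using fun_cong[OF fun_cong[OF same], of W i n] assms(3) unfolding demand_def by simp
  then show "(\<Sum>j<D. Vs W i j * (X (nth_support W j) n - X' (nth_support W j) n))
      = 0"
    by (simp add: right_diff_distrib sum_subtractf)
qed

lemma card_fibre_le:
  fixes f :: "(nat \<Rightarrow> nat \<Rightarrow> 'a::{finite,field}) \<Rightarrow> 'b"
  assumes "1 \<le> L" "L \<le> D" "D \<le> K"
    and Vs: "\<And>W. W \<in> supports K D \<Longrightarrow> Vs W \<in> V_II L D"
    and determines: "\<And>W X X'. W \<in> supports K D \<Longrightarrow> X \<in> mats K N \<Longrightarrow> X' \<in> mats K N \<Longrightarrow>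
      f X = f X' \<Longrightarrow> demand L D N W (Vs W) X = demand L D N W (Vs W) X'"
  shows "card {X \<in> mats K N. f X = a} \<le> CARD('a) ^ ((D - L) * N)"
proof (cases "{X \<in> mats K N. f X = a} = {}")
  case False
  then obtain X0 where X0: "X0 \<in> mats K N" "f X0 = a" by blast
  define F where "F = {X \<in> mats K N. f X = a}"
  define E where "E = common_demand_kernel K D L Vs"
  define col where "col X = restrict (\<lambda>n k. X k n - X0 k n) {0..<N}" for X :: "nat \<Rightarrow> nat \<Rightarrow> 'a"
  have "col ` F \<subseteq> PiE {0..<N} (\<lambda>_. E)"
  proof
    fix Y assume "Y \<in> col ` F"
    then obtain X where X: "X \<in> F" "Y = col X" by blast
    then have XF: "X \<in> mats K N" "f X = f X0" using X0(2) unfolding F_def by auto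
    have "(\<lambda>k. X k n - X0 k n) \<in> E" if "n \<in> {0..<N}" for n
      unfolding E_def using that
      by (intro demand_column_diff_in_common_kernel[OF XF(1) X0(1) _ determines[OF _ XF(1) X0(1)
          XF(2)]])
        simp_all
    then show "Y \<in> PiE {0..<N} (\<lambda>_. E)" unfolding X(2) col_def restrict_PiE_iff by blast
  qed
  moreover have "inj_on col F"
  proof (rule inj_onI)
    fix X Y assume XY: "X \<in> F" "Y \<in> F" "col X = col Y"
    show "X = Y"
    proof (intro ext)
      fix k n
      show "X k n = Y k n"
      proof (cases "n < N")
        case True
        then show ?thesis using fun_cong[OF fun_cong[OF XY(3), of n], of k] unfolding col_def by
            simp
      next
        case False
        then show ?thesis using XY(1,2) unfolding F_def mats_def supported_def by simp
      qed
    qed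
  qed
  moreover have "finite E"
    unfolding E_def common_demand_kernel_def by (rule finite_subset[OF _ finite_vectors]) blast
  ultimately have "card F \<le> card E ^ N"
    using card_inj_on_le[of col F "PiE {0..<N} (\<lambda>_. E)"] by (simp add: finite_PiE card_PiE)
  also have "\<dots> \<le> (CARD('a) ^ (D - L)) ^ N"
    using card_common_demand_kernel_le[OF assms(1-3) Vs] unfolding E_def by (rule power_mono[OF _
        zero_le])
  finally show ?thesis unfolding F_def by (simp add: power_mult)
next
  case True
  then show ?thesis by (simp only: card.empty zero_le)
qed

section \<open>The converse bound\<close>

lemma finite_V_II: "finite (V_II L D :: (nat \<Rightarrow> nat \<Rightarrow> 'a::{finite,field}) set)"
  unfolding V_II_def by (rule finite_subset[OF _ finite_mats]) blast

lemma V_II_nonempty: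
  assumes "L \<le> D"
  shows "(V_II L D :: (nat \<Rightarrow> nat \<Rightarrow> 'a::field) set) \<noteq> {}"
proof -
  define I where "I = (\<lambda>i j. if i < L \<and> j < D \<and> i = j then (1::'a) else 0)"
  have "I \<in> mats L D" unfolding I_def mats_def supported_def by auto
  moreover have "full_row_rank L D I" unfolding full_row_rank_def
  proof (intro allI impI)
    fix c :: "nat \<Rightarrow> 'a" and i assume c: "\<forall>j<D. (\<Sum>i<L. c i * I i j) = 0" and i: "i < L"
    have "(\<Sum>i'<L. c i' * I i' i) = (\<Sum>i'<L. if i' = i then c i else 0)"
      using i assms by (intro sum.cong) (auto simp: I_def)
    also have "\<dots> = c i" using i by simp
    finally show "c i = 0" using c i assms by simp
  qed
  ultimately show ?thesis unfolding V_II_def by blast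
qed

lemma mats_nonempty: "mats m n \<noteq> {}"
  unfolding mats_def supported_def by auto

lemma set_pmf_of_set_supports: "D \<le> K \<Longrightarrow> set_pmf (pmf_of_set (supports K D)) = supports K D"
  using finite_supports supports_nonempty by simp

lemma set_pmf_of_set_V_II:
  "L \<le> D \<Longrightarrow> set_pmf (pmf_of_set (V_II L D :: (nat \<Rightarrow> nat \<Rightarrow> 'a::{finite,field}) set)) = V_II L D"
  using finite_V_II V_II_nonempty by (intro set_pmf_of_set)

lemma set_pmf_of_set_mats:
  "set_pmf (pmf_of_set (mats m n :: (nat \<Rightarrow> nat \<Rightarrow> 'a::{finite,zero}) set)) = mats m n"
  using finite_mats mats_nonempty by (intro set_pmf_of_set)

lemma set_pmf_omega_II:
  assumes "L \<le> D" "D \<le> K"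
  shows "set_pmf (omega_II K D L N \<rho> :: (_ \<times> (nat \<Rightarrow> nat \<Rightarrow> 'a::{finite,field}) \<times> _) pmf) =
     {(W, V, R, X). W \<in> supports K D \<and> V \<in> V_II L D \<and> R \<in> set_pmf \<rho> \<and> X \<in> mats K N}"
  unfolding omega_II_def
  by (auto simp: set_pmf_of_set_supports[OF assms(2)] set_pmf_of_set_V_II[OF assms(1)]
      set_pmf_of_set_mats)

lemma nn_integral_measure_pmf_le_const:
  assumes "\<And>x. x \<in> set_pmf p \<Longrightarrow> f x \<le> c"
  shows "(\<integral>\<^sup>+x. f x \<partial>measure_pmf p) \<le> c"
proof -
  have "(\<integral>\<^sup>+x. f x \<partial>measure_pmf p) \<le> (\<integral>\<^sup>+x. c \<partial>measure_pmf p)"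
    by (rule nn_integral_mono_AE) (simp add: AE_measure_pmf_iff assms)
  also have "\<dots> = c" by (simp add: measure_pmf.emeasure_space_1)
  finally show ?thesis .
qed

lemma pmf_answer_le:
  fixes qf :: "nat set \<Rightarrow> (nat \<Rightarrow> nat \<Rightarrow> 'a::{finite,field}) \<Rightarrow> 'r \<Rightarrow> 'q"
  assumes "L \<le> D" "D \<le> K"
    and fibre: "\<And>W V R. W \<in> supports K D \<Longrightarrow> V \<in> V_II L D \<Longrightarrow> R \<in> set_pmf \<rho> \<Longrightarrow>
      card {X \<in> mats K N. af (qf W V R) X = a} \<le> c"
  shows "pmf (map_pmf (\<lambda>(W, V, R, X). af (qf W V R) X) (omega_II K D L N \<rho>)) a
           \<le> real c / real (card (mats K N :: (nat \<Rightarrow> nat \<Rightarrow> 'a) set))"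
proof -
  let ?M = "mats K N :: (nat \<Rightarrow> nat \<Rightarrow> 'a) set"
  let ?G = "\<lambda>(W, V, R, X). af (qf W V R) X"
  have \<Omega>: "omega_II K D L N \<rho> =
     bind_pmf (pmf_of_set (supports K D)) (\<lambda>W.
     bind_pmf (pmf_of_set (V_II L D)) (\<lambda>V.
     bind_pmf \<rho> (\<lambda>R. map_pmf (\<lambda>X. (W, V, R, X)) (pmf_of_set ?M))))"
    unfolding omega_II_def map_pmf_def by simp
  have inner: "emeasure (measure_pmf (pmf_of_set ?M)) ((\<lambda>X. (W, V, R, X)) -` (?G -` {a}))
      \<le> ennreal (real c / real (card ?M))"
    if "W \<in> supports K D" "V \<in> V_II L D" "R \<in> set_pmf \<rho>" for W V R
  proof -
    have "emeasure (measure_pmf (pmf_of_set ?M)) ((\<lambda>X. (W, V, R, X)) -` (?G -` {a}))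
        = ennreal (real (card (?M \<inter> ((\<lambda>X. (W, V, R, X)) -` (?G -` {a})))) / real (card ?M))"
      using finite_mats mats_nonempty
      by (simp only: measure_pmf.emeasure_eq_measure measure_pmf_of_set[OF mats_nonempty
          finite_mats])
    also have "?M \<inter> ((\<lambda>X. (W, V, R, X)) -` (?G -` {a})) = {X \<in> ?M. af (qf W V R) X = a}" by auto
    also have "ennreal (real (card {X \<in> ?M. af (qf W V R) X = a}) / real (card ?M))
        \<le> ennreal (real c / real (card ?M))"
      using fibre[OF that] by (intro ennreal_leI divide_right_mono) simp_all
    finally show ?thesis .
  qed
  have "ennreal (pmf (map_pmf ?G (omega_II K D L N \<rho>)) a)
      = emeasure (measure_pmf (omega_II K D L N \<rho>)) (?G -` {a})"
    by (simp add: emeasure_pmf_single[symmetric] del: emeasure_pmf_single)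
  also have "\<dots> \<le> ennreal (real c / real (card ?M))"
    unfolding \<Omega> emeasure_bind_pmf
    by (intro nn_integral_measure_pmf_le_const)
       (auto simp: set_pmf_of_set_supports[OF assms(2)] set_pmf_of_set_V_II[OF assms(1)] intro!:
           inner)
  finally show ?thesis by (simp add: ennreal_le_iff[symmetric] del: ennreal_le_iff)
qed

lemma entropy_pmf_ge_log:
  fixes p :: "'b pmf"
  assumes M: "1 \<le> M" and bound: "\<And>x. pmf p x \<le> 1 / M"
  shows "ennreal (log 2 M) \<le> entropy_pmf p"
proof -
  have "ennreal (pmf p x * log 2 M) \<le> ennreal (- pmf p x * log 2 (pmf p x))" for x
  proof (cases "pmf p x = 0")
    case False
    then have pos: "0 < pmf p x" using pmf_nonneg[of p x] by linarith
    have "log 2 (pmf p x) \<le> log 2 (1 / M)"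
      using pos bound[of x] M by (subst log_le_cancel_iff) auto
    also have "\<dots> = - log 2 M" using M by (simp add: log_divide)
    finally have "pmf p x * log 2 (pmf p x) \<le> pmf p x * (- log 2 M)"
      using pos by (intro mult_left_mono) auto
    then show ?thesis by (intro ennreal_leI) simp
  qed simp
  then have "(\<integral>\<^sup>+x. ennreal (pmf p x * log 2 M) \<partial>count_space UNIV) \<le> entropy_pmf p"
    unfolding entropy_pmf_def by (intro nn_integral_mono)
  moreover have "(\<integral>\<^sup>+x. ennreal (pmf p x * log 2 M) \<partial>count_space UNIV) = ennreal (log 2 M)"
  proof -
    have "(\<integral>\<^sup>+x. ennreal (pmf p x * log 2 M) \<partial>count_space UNIV)
        = (\<integral>\<^sup>+x. ennreal (pmf p x) \<partial>count_space UNIV) * ennreal (log 2 M)"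
      using M by (simp add: ennreal_mult nn_integral_multc)
    also have "(\<integral>\<^sup>+x. ennreal (pmf p x) \<partial>count_space UNIV) = 1"
      using nn_integral_pmf[where p=p and A=UNIV] by (simp add: measure_pmf.emeasure_space_1)
    finally show ?thesis by simp
  qed
  ultimately show ?thesis by simp
qed

lemma neg_mult_ln_le:
  fixes q m :: real
  assumes "0 \<le> q" "0 < m"
  shows "- q * ln q \<le> q * ln m + 1 / m - q"
proof (cases "q = 0")
  case True then show ?thesis using assms by simp
next
  case False
  then have q: "0 < q" using assms by simp
  have "ln (1 / (q * m)) \<le> 1 / (q * m) - 1" using q assms by (intro ln_le_minus_one) simp
  then have "q * ln (1 / (q * m)) \<le> q * (1 / (q * m) - 1)" using q by (simp add: mult_left_mono)
  moreover have "q * ln (1 / (q * m)) = - q * ln q - q * ln m"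
    using q assms by (simp add: ln_div ln_mult algebra_simps)
  moreover have "q * (1 / (q * m) - 1) = 1 / m - q" using q assms by (simp add: field_simps)
  ultimately show ?thesis by simp
qed

lemma entropy_pmf_le_log_card:
  fixes p :: "'b pmf"
  assumes S: "finite S" "set_pmf p \<subseteq> S"
  shows "entropy_pmf p \<le> ennreal (log 2 (real (card S)))"
proof -
  have ne: "S \<noteq> {}" using S set_pmf_not_empty[of p] by blast
  have cS: "0 < real (card S)" using S ne by (simp add: card_gt_0_iff)
  define f where "f x = - pmf p x * log 2 (pmf p x)" for x
  have f0: "f x = 0" if "x \<notin> S" for x
  proof -
    have "x \<notin> set_pmf p" using that S by blast
    then show ?thesis unfolding f_def by (simp add: set_pmf_eq)
  qed
  have fnn: "0 \<le> f x" for x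
  proof (cases "pmf p x = 0")
    case True then show ?thesis unfolding f_def by simp
  next
    case False
    then have pos: "0 < pmf p x" using pmf_nonneg[of p x] by linarith
    have "log 2 (pmf p x) \<le> 0" using pos pmf_le_1[of p x] by simp
    then show ?thesis unfolding f_def using pos by (simp add: mult_nonneg_nonpos)
  qed
  have "entropy_pmf p = (\<integral>\<^sup>+x. ennreal (f x) \<partial>count_space UNIV)" unfolding entropy_pmf_def f_def ..
  also have "\<dots> = (\<integral>\<^sup>+x. ennreal (f x) * indicator S x \<partial>count_space UNIV)"
    by (intro nn_integral_cong) (auto simp: f0 indicator_def)
  also have "\<dots> = (\<integral>\<^sup>+x. ennreal (f x) \<partial>count_space S)"
    by (simp add: nn_integral_count_space_indicator)
  also have "\<dots> = (\<Sum>x\<in>S. ennreal (f x))" using S(1) by (rule nn_integral_count_space_finite)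
  also have "\<dots> = ennreal (\<Sum>x\<in>S. f x)" using fnn by (simp add: sum_ennreal)
  also have "(\<Sum>x\<in>S. f x) \<le> log 2 (real (card S))"
  proof -
    have s1: "(\<Sum>x\<in>S. pmf p x) = 1" using S by (rule sum_pmf_eq_1)
    have "(\<Sum>x\<in>S. - pmf p x * ln (pmf p x)) \<le> (\<Sum>x\<in>S. pmf p x * ln (card S) + 1 / card S - pmf p x)"
      by (intro sum_mono neg_mult_ln_le cS pmf_nonneg)
    also have "\<dots> = (\<Sum>x\<in>S. pmf p x) * ln (card S) + card S * (1 / card S) - (\<Sum>x\<in>S. pmf p x)"
      by (simp only: sum_subtractf sum.distrib sum_distrib_right sum_constant)
    also have "\<dots> = ln (card S)" using s1 cS by simp
    finally have l: "(\<Sum>x\<in>S. - pmf p x * ln (pmf p x)) \<le> ln (card S)" .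
    have "(\<Sum>x\<in>S. f x) = (\<Sum>x\<in>S. - pmf p x * ln (pmf p x)) / ln 2"
      unfolding f_def log_def by (simp add: sum_divide_distrib)
    also have "\<dots> \<le> ln (card S) / ln 2" using l by (simp add: divide_right_mono)
    also have "\<dots> = log 2 (real (card S))" unfolding log_def ..
    finally show ?thesis .
  qed
  finally show ?thesis by (simp add: ennreal_leI)
qed


lemma cond_entropy_pmf_eq_0_imp_unique:
  assumes h: "cond_entropy_pmf J = 0" and a: "(z,y) \<in> set_pmf J" "(z',y) \<in> set_pmf J"
  shows "z = z'"
proof (rule ccontr)
  assume ne: "z \<noteq> z'"
  define F where "F zy = ennreal (pmf J zy * log 2 (pmf (map_pmf snd J) (snd zy) / pmf J zy))" for
      zy
  have "(\<integral>\<^sup>+zy. F zy \<partial>count_space UNIV) = 0" using h unfolding cond_entropy_pmf_def F_def .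
  then have "AE zy in count_space UNIV. F zy = 0" by (subst (asm) nn_integral_0_iff_AE) simp_all
  then have F0: "F (z,y) = 0" by (simp add: AE_count_space)
  define p where "p = pmf J (z,y)"
  define p' where "p' = pmf J (z',y)"
  define P where "P = pmf (map_pmf snd J) y"
  have pp: "0 < p" unfolding p_def using a(1) by (simp add: pmf_positive)
  have pp': "0 < p'" unfolding p'_def using a(2) by (simp add: pmf_positive)
  have "P = measure (measure_pmf J) (snd -` {y})" unfolding P_def by (simp add: pmf_map)
  also have "measure (measure_pmf J) {(z,y),(z',y)} \<le> measure (measure_pmf J) (snd -` {y})"
    by (intro measure_pmf.finite_measure_mono) auto
  moreover have "measure (measure_pmf J) {(z,y),(z',y)} = p + p'"
    using ne unfolding p_def p'_def by (simp add: measure_measure_pmf_finite)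
  ultimately have Pge: "p + p' \<le> P" by simp
  have "p * log 2 (P / p) \<le> 0" using F0 unfolding F_def p_def P_def by (simp add: ennreal_eq_0_iff)
  then have "log 2 (P / p) \<le> 0" using pp by (simp add: mult_le_0_iff)
  moreover have "0 < P / p" using Pge pp pp' by simp
  ultimately have "P / p \<le> 1" by simp
  then have "P \<le> p" using pp by (simp add: divide_le_eq)
  then show False using Pge pp' by simp
qed

lemma cond_entropy_pmf_eq_0_if_functional:
  assumes det: "\<And>z y. (z,y) \<in> set_pmf J \<Longrightarrow> z = g y"
  shows "cond_entropy_pmf J = 0"
proof -
  have t0: "ennreal (pmf J zy * log 2 (pmf (map_pmf snd J) (snd zy) / pmf J zy)) = 0" for zy
  proof (cases "zy \<in> set_pmf J")
    case False then show ?thesis by (simp add: set_pmf_eq)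
  next
    case True
    obtain z y where zy: "zy = (z,y)" by (cases zy)
    have "pmf (map_pmf snd J) y = measure (measure_pmf J) (snd -` {y})" by (simp add: pmf_map)
    also have "\<dots> = measure (measure_pmf J) (snd -` {y} \<inter> set_pmf J)" by (simp add:
        measure_Int_set_pmf)
    also have "snd -` {y} \<inter> set_pmf J = {(z,y)}"
    proof
      show "snd -` {y} \<inter> set_pmf J \<subseteq> {(z, y)}"
      proof
        fix w assume w: "w \<in> snd -` {y} \<inter> set_pmf J"
        obtain z1 y1 where w1: "w = (z1,y1)" by (cases w)
        have "y1 = y" using w w1 by simp
        then have "z1 = g y" using det w w1 by blast
        moreover have "z = g y" using det True zy by blast
        ultimately show "w \<in> {(z,y)}" using w1 \<open>y1 = y\<close> by simp
      qed
    next
      show "{(z, y)} \<subseteq> snd -` {y} \<inter> set_pmf J" using True zy by simp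
    qed
    also have "measure (measure_pmf J) {(z,y)} = pmf J (z,y)" by (simp add: measure_pmf_single)
    finally have "pmf (map_pmf snd J) (snd zy) = pmf J zy" using zy by simp
    moreover have "pmf J zy > 0" using True by (simp add: pmf_positive)
    ultimately show ?thesis by simp
  qed
  show ?thesis unfolding cond_entropy_pmf_def by (simp only: t0) simp
qed

lemma JPLT_II_query_occurs_for_all_supports:
  fixes qf :: "nat set \<Rightarrow> (nat \<Rightarrow> nat \<Rightarrow> 'a::{finite,field}) \<Rightarrow> 'r \<Rightarrow> 'q"
  assumes "L \<le> D" "D \<le> K" and prot: "JPLT_II_protocol K D L N \<rho> qf af"
    and "W \<in> supports K D" "V \<in> V_II L D" "R \<in> set_pmf \<rho>" and W': "W' \<in> supports K D"
  obtains V' R' where "V' \<in> V_II L D" "R' \<in> set_pmf \<rho>" "qf W' V' R' = qf W V R"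
proof -
  let ?\<Omega> = "omega_II K D L N \<rho> :: (nat set \<times> (nat \<Rightarrow> nat \<Rightarrow> 'a) \<times> 'r \<times> (nat \<Rightarrow> nat \<Rightarrow> 'a)) pmf"
  define q where "q = qf W V R"
  have \<Omega>: "set_pmf ?\<Omega> =
      {(W, V, R, X). W \<in> supports K D \<and> V \<in> V_II L D \<and> R \<in> set_pmf \<rho> \<and> X \<in> mats K N}"
    by (rule set_pmf_omega_II[OF assms(1,2)])
  have "(W, V, R, 0) \<in> set_pmf ?\<Omega>"
    using \<Omega> assms(4-6) by (simp add: mats_def supported_def)
  then have "measure_pmf.prob ?\<Omega> {(W, V, R, X). qf W V R = q} > 0"
    by (rule measure_pmf_posI) (simp add: q_def)
  then have "measure_pmf.prob ?\<Omega> {(W, V, R, X). W = W' \<and> qf W V R = q}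
      / measure_pmf.prob ?\<Omega> {(W, V, R, X). qf W V R = q} = 1 / real (K choose D)"
    using prot W' unfolding JPLT_II_protocol_def Let_def by blast
  moreover have "0 < real (K choose D)" using assms(2) by simp
  ultimately have "measure_pmf.prob ?\<Omega> {(W, V, R, X). W = W' \<and> qf W V R = q} \<noteq> 0" by auto
  then have "set_pmf ?\<Omega> \<inter> {(W, V, R, X). W = W' \<and> qf W V R = q} \<noteq> {}"
    by (simp add: measure_pmf_zero_iff)
  then show ?thesis using that \<Omega> unfolding q_def by auto
qed

lemma JPLT_II_answer_determines_demand:
  fixes qf :: "nat set \<Rightarrow> (nat \<Rightarrow> nat \<Rightarrow> 'a::{finite,field}) \<Rightarrow> 'r \<Rightarrow> 'q"
  assumes "L \<le> D" "D \<le> K" and prot: "JPLT_II_protocol K D L N \<rho> qf af"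
    and WVR: "W \<in> supports K D" "V \<in> V_II L D" "R \<in> set_pmf \<rho>"
    and X: "X \<in> mats K N" "X' \<in> mats K N" and same: "af (qf W V R) X = af (qf W V R) X'"
  shows "demand L D N W V X = demand L D N W V X'"
proof -
  let ?\<Omega> = "omega_II K D L N \<rho> :: (nat set \<times> (nat \<Rightarrow> nat \<Rightarrow> 'a) \<times> 'r \<times> (nat \<Rightarrow> nat \<Rightarrow> 'a)) pmf"
  define J where "J = map_pmf (\<lambda>(W, V, R, X).
      (demand L D N W V X, af (qf W V R) X, qf W V R, W, V)) ?\<Omega>"
  have "cond_entropy_pmf J = 0" using prot unfolding JPLT_II_protocol_def J_def Let_def by blast
  moreover have "(W, V, R, X) \<in> set_pmf ?\<Omega>" "(W, V, R, X') \<in> set_pmf ?\<Omega>"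
    using set_pmf_omega_II[OF assms(1,2)] WVR X by auto
  then have "(demand L D N W V X, af (qf W V R) X, qf W V R, W, V) \<in> set_pmf J"
    "(demand L D N W V X', af (qf W V R) X, qf W V R, W, V) \<in> set_pmf J"
    unfolding J_def set_map_pmf using same by force+
  ultimately show ?thesis by (rule cond_entropy_pmf_eq_0_imp_unique)
qed

lemma JPLT_II_card_answer_fibre_le:
  fixes qf :: "nat set \<Rightarrow> (nat \<Rightarrow> nat \<Rightarrow> 'a::{finite,field}) \<Rightarrow> 'r \<Rightarrow> 'q"
  assumes "1 \<le> L" "L \<le> D" "D \<le> K" and prot: "JPLT_II_protocol K D L N \<rho> qf af"
    and "W \<in> supports K D" "V \<in> V_II L D" "R \<in> set_pmf \<rho>"
  shows "card {X \<in> mats K N. af (qf W V R) X = a} \<le> CARD('a) ^ ((D - L) * N)"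
proof -
  have "\<exists>V' R'. V' \<in> V_II L D \<and> R' \<in> set_pmf \<rho> \<and> qf W' V' R' = qf W V R"
    if "W' \<in> supports K D" for W'
    by (rule JPLT_II_query_occurs_for_all_supports[OF assms(2-7) that]) blast
  then obtain Vs Rs where VRs: "\<And>W'. W' \<in> supports K D \<Longrightarrow>
      Vs W' \<in> V_II L D \<and> Rs W' \<in> set_pmf \<rho> \<and> qf W' (Vs W') (Rs W') = qf W V R"
    by metis
  show ?thesis
  proof (rule card_fibre_le[OF assms(1-3)])
    show "Vs W' \<in> V_II L D" if "W' \<in> supports K D" for W' using VRs[OF that] by blast
  next
    fix W' X X' assume "W' \<in> supports K D" "X \<in> mats K N" "X' \<in> mats K N"
      "af (qf W V R) X = af (qf W V R) X'"
    then show "demand L D N W' (Vs W') X = demand L D N W' (Vs W') X'"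
      using JPLT_II_answer_determines_demand[OF assms(2-4)] VRs by metis
  qed
qed

lemma JPLT_II_entropy_answer_ge:
  fixes qf :: "nat set \<Rightarrow> (nat \<Rightarrow> nat \<Rightarrow> 'a::{finite,field}) \<Rightarrow> 'r \<Rightarrow> 'q"
  assumes "1 \<le> L" "L \<le> D" "D \<le> K" and prot: "JPLT_II_protocol K D L N \<rho> qf af"
  shows "ennreal (real ((K - D + L) * N) * log 2 (real CARD('a)))
     \<le> entropy_pmf (map_pmf (\<lambda>(W, V, R, X). af (qf W V R) X) (omega_II K D L N \<rho>))"
proof -
  let ?q = "CARD('a)"
  have q: "2 \<le> real ?q" using card_field_ge_2[where 'a='a] by simp
  have "card (mats K N :: (nat \<Rightarrow> nat \<Rightarrow> 'a) set) = ?q ^ ((D - L) * N) * ?q ^ ((K - D + L) * N)"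
    using assms(2,3) by (simp add: card_mats power_add[symmetric] add_mult_distrib[symmetric])
  then have "pmf (map_pmf (\<lambda>(W, V, R, X). af (qf W V R) X) (omega_II K D L N \<rho>)) a
      \<le> 1 / real (?q ^ ((K - D + L) * N))" for a
    using pmf_answer_le[where a = a and af = af and qf = qf, OF assms(2,3)
        JPLT_II_card_answer_fibre_le[where a = a, OF assms]] q
    by (simp add: field_simps)
  then have "ennreal (log 2 (real (?q ^ ((K - D + L) * N))))
      \<le> entropy_pmf (map_pmf (\<lambda>(W, V, R, X). af (qf W V R) X) (omega_II K D L N \<rho>))"
    using q by (intro entropy_pmf_ge_log) simp_all
  then show ?thesis using q by (simp add: log_nat_power)
qed

lemma ennreal_divide_antimono:
  assumes "0 \<le> x" "0 < c" "ennreal c \<le> H"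
  shows "ennreal x / H \<le> ennreal (x / c)"
proof (cases H)
  case (real h)
  then have "c \<le> h" using assms by (simp add: ennreal_le_iff[symmetric] del: ennreal_le_iff)
  then show ?thesis
    using real assms(1,2) by (simp add: divide_ennreal divide_left_mono ennreal_leI)
qed simp

lemma JPLT_II_rate_le:
  fixes qf :: "nat set \<Rightarrow> (nat \<Rightarrow> nat \<Rightarrow> 'a::{finite,field}) \<Rightarrow> 'r \<Rightarrow> 'q"
  assumes "1 \<le> L" "L \<le> D" "D \<le> K" "1 \<le> N" and prot: "JPLT_II_protocol K D L N \<rho> qf af"
  shows "JPLT_II_rate K D L N \<rho> qf af \<le> ennreal (real L / real (K - D + L))"
proof -
  have lq: "0 < log 2 (real CARD('a))" using card_field_ge_2[where 'a='a] by simp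
  have "JPLT_II_rate K D L N \<rho> qf af
      \<le> ennreal (real L * (real N * log 2 (real CARD('a)))
          / (real ((K - D + L) * N) * log 2 (real CARD('a))))"
    unfolding JPLT_II_rate_def using lq assms(1-4)
    by (intro ennreal_divide_antimono JPLT_II_entropy_answer_ge[OF assms(1-3) prot]) simp_all
  also have "\<dots> = ennreal (real L / real (K - D + L))"
  proof -
    have "log 2 (real CARD('a)) \<noteq> 0" using lq by linarith
    then have "real N * log 2 (real CARD('a)) \<noteq> 0" using assms(4) by simp
    from nonzero_mult_divide_mult_cancel_right[OF this, of "real L" "real (K - D + L)"]
    show ?thesis by simp
  qed
  finally show ?thesis .
qed

section \<open>A scheme achieving the bound\<close>

lemma vandermonde_eq_imp_eq:
  fixes \<beta> :: "nat \<Rightarrow> 'a::field"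
  assumes inj: "inj_on \<beta> {0..<D}" and "c \<in> vectors D" "c' \<in> vectors D"
    and eval: "\<And>i. i < D \<Longrightarrow> (\<Sum>d<D. c d * \<beta> i ^ d) = (\<Sum>d<D. c' d * \<beta> i ^ d)"
  shows "c = c'"
proof -
  define p where "p = (\<Sum>d<D. monom (c d - c' d) d)"
  have coeff_p: "coeff p n = (if n < D then c n - c' n else 0)" for n
    unfolding p_def by (simp add: coeff_sum coeff_monom)
  have "p = 0"
  proof (rule ccontr)
    assume "p \<noteq> 0"
    then have "degree p < D" using coeff_p[of "degree p"] by (cases "degree p < D") auto
    have "\<beta> ` {0..<D} \<subseteq> {x. poly p x = 0}"
    proof
      fix x assume "x \<in> \<beta> ` {0..<D}"
      then obtain i where i: "i < D" "x = \<beta> i" by auto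
      have "poly p x = (\<Sum>d<D. c d * \<beta> i ^ d) - (\<Sum>d<D. c' d * \<beta> i ^ d)"
        unfolding p_def i(2) by (simp add: poly_sum poly_monom left_diff_distrib sum_subtractf)
      then show "x \<in> {x. poly p x = 0}" using eval[OF i(1)] by simp
    qed
    then have "card (\<beta> ` {0..<D}) \<le> card {x. poly p x = 0}"
      by (rule card_mono[OF poly_roots_finite[OF \<open>p \<noteq> 0\<close>]])
    then have "D \<le> card {x. poly p x = 0}" using card_image[OF inj] by simp
    also have "\<dots> \<le> degree p" by (rule card_poly_roots_bound[OF \<open>p \<noteq> 0\<close>])
    finally show False using \<open>degree p < D\<close> by simp
  qed
  then have "c n = c' n" for n
    using coeff_p[of n] assms(2,3) unfolding vectors_def by (cases "n < D") auto
  then show "c = c'" by (simp add: fun_eq_iff)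
qed

text \<open>Over a finite field, an injective map from \<open>vectors D\<close> to itself is onto.\<close>

lemma vandermonde_surj:
  fixes \<beta> :: "nat \<Rightarrow> 'a::{finite,field}"
  assumes inj: "inj_on \<beta> {0..<D}"
  obtains c where "\<And>i. i < D \<Longrightarrow> (\<Sum>d<D. c d * \<beta> i ^ d) = t i"
proof -
  define ev where "ev c = (\<lambda>i. if i < D then (\<Sum>d<D. c d * \<beta> i ^ d) else 0)" for c :: "nat \<Rightarrow> 'a"
  have "inj_on ev (vectors D)"
  proof (rule inj_onI)
    fix c c' assume cc': "c \<in> vectors D" "c' \<in> vectors D" "ev c = ev c'"
    show "c = c'"
    proof (rule vandermonde_eq_imp_eq[OF inj cc'(1,2)])
      fix i assume "i < D"
      then show "(\<Sum>d<D. c d * \<beta> i ^ d) = (\<Sum>d<D. c' d * \<beta> i ^ d)"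
        using fun_cong[OF cc'(3), of i] unfolding ev_def by simp
    qed
  qed
  moreover have "ev ` vectors D \<subseteq> vectors D" unfolding ev_def vectors_def by auto
  ultimately have "ev ` vectors D = vectors D"
    by (intro card_subset_eq finite_vectors) (simp_all add: card_image)
  moreover have "(\<lambda>i. if i < D then t i else 0) \<in> vectors D" unfolding vectors_def by simp
  ultimately have "(\<lambda>i. if i < D then t i else 0) \<in> ev ` vectors D" by simp
  then obtain c where c: "(\<lambda>i. if i < D then t i else 0) = ev c" by blast
  show ?thesis
  proof (rule that)
    fix i assume "i < D"
    then show "(\<Sum>d<D. c d * \<beta> i ^ d) = t i" using fun_cong[OF c, of i] unfolding ev_def by simp
  qed
qed

lemma vandermonde_transpose_eq_0:
  fixes \<beta> :: "nat \<Rightarrow> 'a::{finite,field}"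
  assumes inj: "inj_on \<beta> {0..<D}" and zero: "\<And>d. d < D \<Longrightarrow> (\<Sum>j<D. \<beta> j ^ d * v j) = 0"
    and "m < D"
  shows "v m = 0"
proof -
  obtain c where c: "\<And>i. i < D \<Longrightarrow> (\<Sum>d<D. c d * \<beta> i ^ d) = (if i = m then 1 else 0)"
    using vandermonde_surj[OF inj, where t = "\<lambda>i. if i = m then 1 else 0"] by blast
  have "v m = (\<Sum>j<D. if j = m then v j else 0)" using \<open>m < D\<close> by simp
  also have "\<dots> = (\<Sum>j<D. v j * (\<Sum>d<D. c d * \<beta> j ^ d))" using c by (intro sum.cong) auto
  also have "\<dots> = (\<Sum>j<D. \<Sum>d<D. c d * (\<beta> j ^ d * v j))" by (simp add: sum_distrib_left mult_ac)
  also have "\<dots> = (\<Sum>d<D. c d * (\<Sum>j<D. \<beta> j ^ d * v j))"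
    by (subst sum.swap) (simp add: sum_distrib_left)
  also have "\<dots> = 0" using zero by simp
  finally show ?thesis .
qed

lemma nth_support_less:
  assumes "W \<in> supports K D" "j < D"
  shows "nth_support W j < K"
  using assms supports_sorted_list[OF assms(1)] nth_mem[of j "sorted_list_of_set W"]
  unfolding supports_def by auto

lemma inj_on_nth_support:
  assumes \<alpha>: "inj_on \<alpha> {0..<K}" and W: "W \<in> supports K D"
  shows "inj_on (\<lambda>j. \<alpha> (nth_support W j)) {0..<D}"
proof (rule inj_onI)
  fix i j assume ij: "i \<in> {0..<D}" "j \<in> {0..<D}" "\<alpha> (nth_support W i) = \<alpha> (nth_support W j)"
  have "nth_support W i \<in> {0..<K}" "nth_support W j \<in> {0..<K}"
    using ij(1,2) nth_support_less[OF W] by auto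
  then have "nth_support W i = nth_support W j" by (rule inj_onD[OF \<alpha> ij(3)])
  then show "i = j" using ij supports_sorted_list(2)[OF W] by (simp add: nth_eq_iff_index_eq)
qed

definition full_column_rank_mats :: "nat \<Rightarrow> nat \<Rightarrow> (nat \<Rightarrow> nat \<Rightarrow> 'a::field) set" where
  "full_column_rank_mats D L = {B \<in> mats D L. full_row_rank L D (\<lambda>i j. B j i)}"

lemma bij_betw_transpose_V_II:
  "bij_betw (\<lambda>M i j. M j i) (V_II L D) (full_column_rank_mats D L)"
proof (rule bij_betwI')
  fix y :: "nat \<Rightarrow> nat \<Rightarrow> 'a" assume "y \<in> full_column_rank_mats D L"
  then have "(\<lambda>i j. y j i) \<in> V_II L D"
    unfolding full_column_rank_mats_def V_II_def mats_def supported_def by auto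
  then show "\<exists>x\<in>V_II L D. y = (\<lambda>i j. x j i)" by force
qed (auto simp: fun_eq_iff full_column_rank_mats_def V_II_def mats_def supported_def)

lemma finite_full_column_rank_mats:
  "finite (full_column_rank_mats D L :: (nat \<Rightarrow> nat \<Rightarrow> 'a::{finite,field}) set)"
  using bij_betw_finite[OF bij_betw_transpose_V_II] finite_V_II by blast

lemma card_full_column_rank_mats:
  "card (full_column_rank_mats D L :: (nat \<Rightarrow> nat \<Rightarrow> 'a::{finite,field}) set) = card (V_II L D ::
      (nat \<Rightarrow> nat \<Rightarrow> 'a) set)"
  using bij_betw_same_card[OF bij_betw_transpose_V_II] by (rule sym)

definition query_matrix ::
    "(nat \<Rightarrow> 'a::field) \<Rightarrow> nat \<Rightarrow> nat \<Rightarrow> nat set \<Rightarrow> (nat \<Rightarrow> nat \<Rightarrow> 'a) \<Rightarrow> nat \<Rightarrow> nat \<Rightarrow> 'a" where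
  "query_matrix \<alpha> D L W V =
     (\<lambda>d l. if d < D \<and> l < L then (\<Sum>j<D. \<alpha> (nth_support W j) ^ d * V l j) else 0)"

lemma query_matrix_mats: "query_matrix \<alpha> D L W V \<in> mats D L"
  unfolding query_matrix_def mats_def supported_def by auto

lemma query_matrix_mult:
  assumes "d < D"
  shows "(\<Sum>i<L. c i * query_matrix \<alpha> D L W V d i)
    = (\<Sum>j<D. \<alpha> (nth_support W j) ^ d * (\<Sum>i<L. c i * V i j))"
proof -
  have "(\<Sum>i<L. c i * query_matrix \<alpha> D L W V d i)
      = (\<Sum>i<L. \<Sum>j<D. \<alpha> (nth_support W j) ^ d * (c i * V i j))"
    using assms unfolding query_matrix_def by (simp add: sum_distrib_left mult_ac)
  also have "\<dots> = (\<Sum>j<D. \<alpha> (nth_support W j) ^ d * (\<Sum>i<L. c i * V i j))"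
    by (subst sum.swap) (simp add: sum_distrib_left)
  finally show ?thesis .
qed

lemma inj_on_query_matrix:
  fixes \<alpha> :: "nat \<Rightarrow> 'a::{finite,field}"
  assumes \<alpha>: "inj_on \<alpha> {0..<K}" and W: "W \<in> supports K D"
  shows "inj_on (query_matrix \<alpha> D L W) (V_II L D)"
proof (rule inj_onI)
  fix V V' assume V: "V \<in> V_II L D" "V' \<in> V_II L D" "query_matrix \<alpha> D L W V = query_matrix \<alpha> D L W
      V'"
  have "V l j = V' l j" if "l < L" "j < D" for l j
  proof -
    have "(\<Sum>j<D. \<alpha> (nth_support W j) ^ d * V l j) = (\<Sum>j<D. \<alpha> (nth_support W j) ^ d * V' l j)"
      if "d < D" for d
      using fun_cong[OF fun_cong[OF V(3), of d], of l] that \<open>l < L\<close> unfolding query_matrix_def by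
          simp
    then have "(\<Sum>j<D. \<alpha> (nth_support W j) ^ d * (V l j - V' l j)) = 0" if "d < D" for d
      using that by (simp add: right_diff_distrib sum_subtractf)
    then show ?thesis
      using vandermonde_transpose_eq_0[OF inj_on_nth_support[OF \<alpha> W], of "\<lambda>j. V l j - V' l j" j]
          \<open>j < D\<close>
      by simp
  qed
  moreover have "V l j = V' l j" if "\<not> (l < L \<and> j < D)" for l j
    using V(1,2) that unfolding V_II_def mats_def supported_def by auto
  ultimately show "V = V'" by (metis ext)
qed

lemma query_matrix_full_column_rank:
  fixes \<alpha> :: "nat \<Rightarrow> 'a::{finite,field}"
  assumes \<alpha>: "inj_on \<alpha> {0..<K}" and W: "W \<in> supports K D" and V: "V \<in> V_II L D"
  shows "query_matrix \<alpha> D L W V \<in> full_column_rank_mats D L"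
  unfolding full_column_rank_mats_def
proof (intro CollectI conjI query_matrix_mats)
  show "full_row_rank L D (\<lambda>i j. query_matrix \<alpha> D L W V j i)"
    unfolding full_row_rank_def
  proof (intro allI impI)
    fix c :: "nat \<Rightarrow> 'a" and i
    assume c: "\<forall>j<D. (\<Sum>i<L. c i * query_matrix \<alpha> D L W V j i) = 0" and "i < L"
    have "(\<Sum>j<D. \<alpha> (nth_support W j) ^ d * (\<Sum>i<L. c i * V i j)) = 0" if "d < D" for d
    proof -
      have "(\<Sum>i<L. c i * query_matrix \<alpha> D L W V d i) = 0" using c that by blast
      then show ?thesis by (simp only: query_matrix_mult[OF that])
    qed
    then have "\<forall>j<D. (\<Sum>i<L. c i * V i j) = 0"
      using vandermonde_transpose_eq_0[OF inj_on_nth_support[OF \<alpha> W],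
          where v = "\<lambda>j. \<Sum>i<L. c i * V i j"] by blast
    then show "c i = 0"
      using V \<open>i < L\<close> unfolding V_II_def full_row_rank_def by blast
  qed
qed

lemma bij_betw_query_matrix:
  fixes \<alpha> :: "nat \<Rightarrow> 'a::{finite,field}"
  assumes \<alpha>: "inj_on \<alpha> {0..<K}" and W: "W \<in> supports K D"
  shows "bij_betw (query_matrix \<alpha> D L W) (V_II L D) (full_column_rank_mats D L)"
proof -
  have "query_matrix \<alpha> D L W ` V_II L D \<subseteq> full_column_rank_mats D L"
    using query_matrix_full_column_rank[OF \<alpha> W] by blast
  moreover have "card (query_matrix \<alpha> D L W ` V_II L D) = card (full_column_rank_mats D L :: (nat
      \<Rightarrow> nat \<Rightarrow> 'a) set)"
    unfolding card_image[OF inj_on_query_matrix[OF \<alpha> W]] card_full_column_rank_mats by (rule refl)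
  ultimately have "query_matrix \<alpha> D L W ` V_II L D = full_column_rank_mats D L"
    by (rule card_subset_eq[OF finite_full_column_rank_mats])
  then show ?thesis using inj_on_query_matrix[OF \<alpha> W] unfolding bij_betw_def by blast
qed

definition interp_coeffs :: "(nat \<Rightarrow> 'a) \<Rightarrow> nat \<Rightarrow> (nat \<Rightarrow> nat \<Rightarrow> 'a::field) \<Rightarrow> nat \<Rightarrow> 'a" where
  "interp_coeffs \<alpha> D X = (SOME c. \<forall>i<D. (\<Sum>d<D. c d * \<alpha> i ^ d) = X i 0)"

definition interp_residual :: "(nat \<Rightarrow> 'a) \<Rightarrow> nat \<Rightarrow> (nat \<Rightarrow> nat \<Rightarrow> 'a::field) \<Rightarrow> nat \<Rightarrow> 'a" where
  "interp_residual \<alpha> D X k = X k 0 - (\<Sum>d<D. interp_coeffs \<alpha> D X d * \<alpha> k ^ d)"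

lemma interp_residual_eq_0:
  fixes \<alpha> :: "nat \<Rightarrow> 'a::{finite,field}"
  assumes "inj_on \<alpha> {0..<D}" "k < D"
  shows "interp_residual \<alpha> D X k = 0"
proof -
  obtain c where "\<And>i. i < D \<Longrightarrow> (\<Sum>d<D. c d * \<alpha> i ^ d) = X i 0"
    using vandermonde_surj[OF assms(1), where t = "\<lambda>i. X i 0"] by blast
  then have "\<exists>c. \<forall>i<D. (\<Sum>d<D. c d * \<alpha> i ^ d) = X i 0" by blast
  then have "\<forall>i<D. (\<Sum>d<D. interp_coeffs \<alpha> D X d * \<alpha> i ^ d) = X i 0"
    unfolding interp_coeffs_def by (rule someI_ex)
  then show ?thesis using assms(2) unfolding interp_residual_def by simp
qed

definition answer_matrix ::
    "(nat \<Rightarrow> 'a) \<Rightarrow> nat \<Rightarrow> nat \<Rightarrow> nat \<Rightarrow> (nat \<Rightarrow> nat \<Rightarrow> 'a::field) \<Rightarrow> (nat \<Rightarrow> nat \<Rightarrow> 'a) \<Rightarrow> nat \<Rightarrow> nat \<Rightarrow> 'a"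
        where
  "answer_matrix \<alpha> K D L B X = (\<lambda>i n.
     if n = 0 \<and> i < L then (\<Sum>d<D. B d i * interp_coeffs \<alpha> D X d)
     else if n = 0 \<and> L \<le> i \<and> i < L + (K - D) then interp_residual \<alpha> D X (D + (i - L))
     else 0)"

lemma answer_matrix_mats: "D \<le> K \<Longrightarrow> answer_matrix \<alpha> K D L B X \<in> mats (K - D + L) 1"
  unfolding answer_matrix_def mats_def supported_def by auto

definition decode_matrix ::
    "nat \<Rightarrow> nat \<Rightarrow> nat set \<Rightarrow> (nat \<Rightarrow> nat \<Rightarrow> 'a::field) \<Rightarrow> (nat \<Rightarrow> nat \<Rightarrow> 'a) \<Rightarrow> nat \<Rightarrow> nat \<Rightarrow> 'a" where
  "decode_matrix D L W V A = (\<lambda>i n. if i < L \<and> n = 0 then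
     A i 0 + (\<Sum>j<D. V i j * (if D \<le> nth_support W j then A (L + (nth_support W j - D)) 0 else 0))
     else 0)"

lemma decode_answer_matrix:
  fixes \<alpha> :: "nat \<Rightarrow> 'a::{finite,field}"
  assumes \<alpha>: "inj_on \<alpha> {0..<K}" and "D \<le> K" and W: "W \<in> supports K D"
  shows "decode_matrix D L W V (answer_matrix \<alpha> K D L (query_matrix \<alpha> D L W V) X) = demand L D 1 W
      V X"
proof (intro ext)
  fix i n
  define A where "A = answer_matrix \<alpha> K D L (query_matrix \<alpha> D L W V) X"
  define P where "P k = (\<Sum>d<D. interp_coeffs \<alpha> D X d * \<alpha> k ^ d)" for k
  have residual: "(if D \<le> nth_support W j then A (L + (nth_support W j - D)) 0 else 0)
      = interp_residual \<alpha> D X (nth_support W j)" if "j < D" for j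
    using nth_support_less[OF W that] interp_residual_eq_0[OF inj_on_subset[OF \<alpha>]] \<open>D \<le> K\<close>
    unfolding A_def answer_matrix_def by auto
  have head: "A i 0 = (\<Sum>j<D. V i j * P (nth_support W j))" if "i < L"
  proof -
    have "A i 0 = (\<Sum>d<D. interp_coeffs \<alpha> D X d * (\<Sum>j<D. \<alpha> (nth_support W j) ^ d * V i j))"
      using that unfolding A_def answer_matrix_def query_matrix_def by (simp add: mult.commute)
    also have "\<dots> = (\<Sum>d<D. \<Sum>j<D. V i j * (interp_coeffs \<alpha> D X d * \<alpha> (nth_support W j) ^ d))"
      by (simp add: sum_distrib_left mult_ac)
    also have "\<dots> = (\<Sum>j<D. V i j * P (nth_support W j))"
      unfolding P_def by (subst sum.swap) (simp add: sum_distrib_left)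
    finally show ?thesis .
  qed
  show "decode_matrix D L W V A i n = demand L D 1 W V X i n"
  proof (cases "i < L \<and> n = 0")
    case True
    have "(\<Sum>j<D. V i j * (if D \<le> nth_support W j then A (L + (nth_support W j - D)) 0 else 0))
        = (\<Sum>j<D. V i j * interp_residual \<alpha> D X (nth_support W j))"
      using residual by (intro sum.cong) simp_all
    then have "decode_matrix D L W V A i n = (\<Sum>j<D. V i j * P (nth_support W j))
        + (\<Sum>j<D. V i j * interp_residual \<alpha> D X (nth_support W j))"
      using True head unfolding decode_matrix_def by simp
    also have "\<dots> = (\<Sum>j<D. V i j * X (nth_support W j) 0)"
      unfolding interp_residual_def P_def by (simp add: right_diff_distrib sum_subtractf)
    finally show ?thesis using True unfolding demand_def by simp
  qed (auto simp: decode_matrix_def demand_def)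
qed

text \<open>Queries and answers of a protocol are natural numbers here; the matrices of the scheme are
  encoded by \<^const>\<open>to_nat_on\<close> on the (finite) sets of matrices of the right shape.\<close>

definition scheme_query ::
    "(nat \<Rightarrow> 'a) \<Rightarrow> nat \<Rightarrow> nat \<Rightarrow> nat set \<Rightarrow> (nat \<Rightarrow> nat \<Rightarrow> 'a::{finite,field}) \<Rightarrow> nat \<Rightarrow> nat" where
  "scheme_query \<alpha> D L W V R = to_nat_on (mats D L) (query_matrix \<alpha> D L W V)"

definition scheme_answer ::
    "(nat \<Rightarrow> 'a) \<Rightarrow> nat \<Rightarrow> nat \<Rightarrow> nat \<Rightarrow> nat \<Rightarrow> (nat \<Rightarrow> nat \<Rightarrow> 'a::{finite,field}) \<Rightarrow> nat" where
  "scheme_answer \<alpha> K D L q X =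
     to_nat_on (mats (K - D + L) 1) (answer_matrix \<alpha> K D L (from_nat_into (mats D L) q) X)"

lemma countable_mats: "countable (mats m n :: (nat \<Rightarrow> nat \<Rightarrow> 'a::{finite,zero}) set)"
  using finite_mats by (rule countable_finite)

lemma scheme_answer_determines_demand:
  fixes \<alpha> :: "nat \<Rightarrow> 'a::{finite,field}"
  assumes \<alpha>: "inj_on \<alpha> {0..<K}" and "D \<le> K" and W: "W \<in> supports K D"
  shows "demand L D 1 W V X = decode_matrix D L W V
    (from_nat_into (mats (K - D + L) 1) (scheme_answer \<alpha> K D L (scheme_query \<alpha> D L W V R) X))"
proof -
  have "from_nat_into (mats D L) (scheme_query \<alpha> D L W V R) = query_matrix \<alpha> D L W V"
    unfolding scheme_query_def by (rule from_nat_into_to_nat_on[OF countable_mats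
        query_matrix_mats])
  then have "from_nat_into (mats (K - D + L) 1) (scheme_answer \<alpha> K D L (scheme_query \<alpha> D L W V R) X)
      = answer_matrix \<alpha> K D L (query_matrix \<alpha> D L W V) X"
    unfolding scheme_answer_def
    by (simp only: from_nat_into_to_nat_on[OF countable_mats answer_matrix_mats[OF \<open>D \<le> K\<close>]])
  then show ?thesis by (simp only: decode_answer_matrix[OF assms])
qed

lemma scheme_recoverable:
  fixes \<alpha> :: "nat \<Rightarrow> 'a::{finite,field}"
  assumes \<alpha>: "inj_on \<alpha> {0..<K}" and "L \<le> D" "D \<le> K"
  shows "cond_entropy_pmf (map_pmf (\<lambda>(W, V, R, X). (demand L D 1 W V X,
    scheme_answer \<alpha> K D L (scheme_query \<alpha> D L W V R) X, scheme_query \<alpha> D L W V R, W, V))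
    (omega_II K D L 1 \<rho>)) = 0"
proof (rule cond_entropy_pmf_eq_0_if_functional)
  fix z y assume "(z, y) \<in> set_pmf (map_pmf (\<lambda>(W, V, R, X). (demand L D 1 W V X,
    scheme_answer \<alpha> K D L (scheme_query \<alpha> D L W V R) X, scheme_query \<alpha> D L W V R, W, V))
    (omega_II K D L 1 \<rho>))"
  then obtain W V R X where WVRX: "(W, V, R, X) \<in> set_pmf (omega_II K D L 1 \<rho>)"
    and z: "z = demand L D 1 W V X"
    and y: "y = (scheme_answer \<alpha> K D L (scheme_query \<alpha> D L W V R) X, scheme_query \<alpha> D L W V R, W,
        V)"
    by auto
  have "W \<in> supports K D" using WVRX set_pmf_omega_II[OF assms(2,3)] by auto
  then show "z = (\<lambda>(a, q, W, V). decode_matrix D L W V (from_nat_into (mats (K - D + L) 1) a)) y"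
    unfolding z y prod.case by (rule scheme_answer_determines_demand[OF \<alpha> assms(3)])
qed

lemma pmf_of_set_times:
  assumes "finite A" "A \<noteq> {}" "finite B" "B \<noteq> {}"
  shows "pair_pmf (pmf_of_set A) (pmf_of_set B) = pmf_of_set (A \<times> B)"
proof (rule pmf_eqI)
  fix x :: "'a \<times> 'b"
  show "pmf (pair_pmf (pmf_of_set A) (pmf_of_set B)) x = pmf (pmf_of_set (A \<times> B)) x"
    using assms by (cases x) (simp add: pmf_pair indicator_def card_cartesian_product)
qed

lemma map_pmf_omega_II_support_coeffs:
  assumes "L \<le> D" "D \<le> K"
  shows "map_pmf (\<lambda>(W,V,R,X). (W,V)) (omega_II K D L N \<rho> :: (_ \<times> (nat \<Rightarrow> nat \<Rightarrow> 'a::{finite,field})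
      \<times> _) pmf)
     = pmf_of_set (supports K D \<times> (V_II L D :: (nat \<Rightarrow> nat \<Rightarrow> 'a) set))"
proof -
  have "map_pmf (\<lambda>(W,V,R,X). (W,V)) (omega_II K D L N \<rho> :: (_ \<times> (nat \<Rightarrow> nat \<Rightarrow> 'a) \<times> _) pmf)
     = pair_pmf (pmf_of_set (supports K D)) (pmf_of_set (V_II L D :: (nat \<Rightarrow> nat \<Rightarrow> 'a) set))"
    unfolding omega_II_def pair_pmf_def by (simp add: map_bind_pmf)
  also have "\<dots> = pmf_of_set (supports K D \<times> (V_II L D :: (nat \<Rightarrow> nat \<Rightarrow> 'a) set))"
    using finite_supports supports_nonempty[OF assms(2)] finite_V_II V_II_nonempty[OF assms(1)] by
        (intro pmf_of_set_times) auto
  finally show ?thesis .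
qed

lemma prob_omega_II_support_coeffs:
  assumes "L \<le> D" "D \<le> K"
  shows "measure_pmf.prob (omega_II K D L N \<rho> :: (_ \<times> (nat \<Rightarrow> nat \<Rightarrow> 'a::{finite,field}) \<times> _) pmf)
      {(W,V,R,X). P W V}
     = real (card ((supports K D \<times> (V_II L D :: (nat \<Rightarrow> nat \<Rightarrow> 'a) set)) \<inter> {(W,V). P W V}))
       / real (card (supports K D \<times> (V_II L D :: (nat \<Rightarrow> nat \<Rightarrow> 'a) set)))"
proof -
  let ?\<Omega> = "omega_II K D L N \<rho> :: (_ \<times> (nat \<Rightarrow> nat \<Rightarrow> 'a) \<times> _) pmf"
  have e: "{(W,V,R,X). P W V} = (\<lambda>(W,V,R,X). (W,V)) -` {(W,V). P W V}" by auto
  have "measure_pmf.prob ?\<Omega> {(W,V,R,X). P W V} = measure_pmf.prob ?\<Omega> ((\<lambda>(W,V,R,X). (W,V)) -`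
      {(W,V). P W V})"
    by (simp only: e)
  also have "\<dots> = measure_pmf.prob (map_pmf (\<lambda>(W,V,R,X). (W,V)) ?\<Omega>) {(W,V). P W V}"
    by (rule measure_map_pmf[symmetric])
  also have "\<dots> = measure_pmf.prob (pmf_of_set (supports K D \<times> (V_II L D :: (nat \<Rightarrow> nat \<Rightarrow> 'a) set)))
      {(W,V). P W V}"
    by (simp only: map_pmf_omega_II_support_coeffs[OF assms])
  also have "\<dots> = real (card ((supports K D \<times> (V_II L D :: (nat \<Rightarrow> nat \<Rightarrow> 'a) set)) \<inter> {(W,V). P W V}))
       / real (card (supports K D \<times> (V_II L D :: (nat \<Rightarrow> nat \<Rightarrow> 'a) set)))"
  proof (rule measure_pmf_of_set)
    show "finite (supports K D \<times> (V_II L D :: (nat \<Rightarrow> nat \<Rightarrow> 'a) set))"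
      by (rule finite_cartesian_product[OF finite_supports finite_V_II])
    show "supports K D \<times> (V_II L D :: (nat \<Rightarrow> nat \<Rightarrow> 'a) set) \<noteq> {}"
      using supports_nonempty[OF assms(2)] V_II_nonempty[OF assms(1)] by simp
  qed
  finally show ?thesis .
qed

lemma card_filter_bij_betw:
  assumes "bij_betw f A B"
  shows "card {x \<in> A. g (f x) = q} = card {y \<in> B. g y = q}"
proof -
  have "bij_betw f {x \<in> A. g (f x) = q} {y \<in> B. g y = q}"
    using assms unfolding bij_betw_def by (auto intro: inj_on_subset)
  then show ?thesis by (rule bij_betw_same_card)
qed

text \<open>The query is a bijective image of the uniformly distributed coefficient matrix, whatever the
  support, so it carries no information about the support.\<close>

lemma scheme_joint_privacy:
  fixes \<alpha> :: "nat \<Rightarrow> 'a::{finite,field}"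
  assumes \<alpha>: "inj_on \<alpha> {0..<K}" and "L \<le> D" "D \<le> K"
    and pos: "measure_pmf.prob (omega_II K D L N \<rho>) {(W, V, R, X). scheme_query \<alpha> D L W V R = q} >
        0"
    and W': "W' \<in> supports K D"
  shows "measure_pmf.prob (omega_II K D L N \<rho>) {(W, V, R, X). W = W' \<and> scheme_query \<alpha> D L W V R = q}
      / measure_pmf.prob (omega_II K D L N \<rho>) {(W, V, R, X). scheme_query \<alpha> D L W V R = q}
    = 1 / real (K choose D)"
proof -
  let ?S = "supports K D" and ?T = "V_II L D :: (nat \<Rightarrow> nat \<Rightarrow> 'a) set"
  let ?Q = "\<lambda>W V. to_nat_on (mats D L) (query_matrix \<alpha> D L W V) = q"
  define c where "c = card {B \<in> (full_column_rank_mats D L :: (nat \<Rightarrow> nat \<Rightarrow> 'a) set).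
    to_nat_on (mats D L) B = q}"
  have fibre: "card {V \<in> ?T. ?Q W V} = c" if "W \<in> ?S" for W
    unfolding c_def by (rule card_filter_bij_betw[OF bij_betw_query_matrix[OF \<alpha> that]])
  have "(?S \<times> ?T) \<inter> {(W, V). W = W' \<and> ?Q W V} = Pair W' ` {V \<in> ?T. ?Q W' V}"
    using W' by auto
  then have num: "card ((?S \<times> ?T) \<inter> {(W, V). W = W' \<and> ?Q W V}) = c"
    using fibre[OF W'] by (simp add: card_image inj_on_def)
  have "card (Sigma ?S (\<lambda>W. {V \<in> ?T. ?Q W V})) = (\<Sum>W\<in>?S. card {V \<in> ?T. ?Q W V})"
    by (rule card_SigmaI[OF finite_supports]) (auto intro: finite_subset[OF _ finite_V_II])
  also have "\<dots> = card ?S * c" using fibre by simp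
  also have "Sigma ?S (\<lambda>W. {V \<in> ?T. ?Q W V}) = (?S \<times> ?T) \<inter> {(W, V). ?Q W V}" by auto
  finally have den: "card ((?S \<times> ?T) \<inter> {(W, V). ?Q W V}) = card ?S * c" .
  have "0 < card (?S \<times> ?T)"
    using finite_supports finite_V_II[where 'a='a] supports_nonempty[OF assms(3)]
      V_II_nonempty[OF assms(2), where 'a='a]
    by (simp add: card_gt_0_iff)
  moreover have "0 < card ?S"
    using finite_supports supports_nonempty[OF assms(3)] by (simp add: card_gt_0_iff)
  moreover have "c \<noteq> 0"
    using pos den prob_omega_II_support_coeffs[OF assms(2,3), where P = ?Q and N = N and \<rho> = \<rho> and
        'a = 'a]
    by (cases "c = 0") (auto simp: scheme_query_def)
  ultimately show ?thesis
    using prob_omega_II_support_coeffs[OF assms(2,3), where P = "\<lambda>W V. W = W' \<and> ?Q W V" and N = N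
        and \<rho> = \<rho> and 'a = 'a]
      prob_omega_II_support_coeffs[OF assms(2,3), where P = ?Q and N = N and \<rho> = \<rho> and 'a = 'a]
          num den
    by (simp add: scheme_query_def card_supports[symmetric])
qed

lemma scheme_JPLT_II_protocol:
  fixes \<alpha> :: "nat \<Rightarrow> 'a::{finite,field}"
  assumes "inj_on \<alpha> {0..<K}" "L \<le> D" "D \<le> K"
  shows "JPLT_II_protocol K D L 1 \<rho> (scheme_query \<alpha> D L) (scheme_answer \<alpha> K D L)"
  unfolding JPLT_II_protocol_def Let_def
  using scheme_recoverable[OF assms] scheme_joint_privacy[OF assms] by blast

lemma scheme_entropy_answer_le:
  fixes \<alpha> :: "nat \<Rightarrow> 'a::{finite,field}"
  assumes "D \<le> K"
  shows "entropy_pmf (map_pmf (\<lambda>(W, V, R, X). scheme_answer \<alpha> K D L (scheme_query \<alpha> D L W V R) X)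
      (omega_II K D L 1 \<rho>)) \<le> ennreal (real (K - D + L) * log 2 (real CARD('a)))"
proof -
  let ?A = "map_pmf (\<lambda>(W, V, R, X). scheme_answer \<alpha> K D L (scheme_query \<alpha> D L W V R) X)
      (omega_II K D L 1 \<rho>)"
  define T where "T = to_nat_on (mats (K - D + L) 1) ` (mats (K - D + L) 1 :: (nat \<Rightarrow> nat \<Rightarrow> 'a) set)"
  have "finite T" unfolding T_def by (simp add: finite_mats)
  moreover have "set_pmf ?A \<subseteq> T"
  proof
    fix b assume "b \<in> set_pmf ?A"
    then obtain W V R X where "b = scheme_answer \<alpha> K D L (scheme_query \<alpha> D L W V R) X" by auto
    then show "b \<in> T" unfolding T_def scheme_answer_def using answer_matrix_mats[OF assms] by blast
  qed
  ultimately have "entropy_pmf ?A \<le> ennreal (log 2 (real (card T)))"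
    by (rule entropy_pmf_le_log_card)
  also have "log 2 (real (card T)) \<le> log 2 (real (CARD('a) ^ (K - D + L)))"
  proof -
    have "card T \<le> CARD('a) ^ (K - D + L)"
      unfolding T_def using card_image_le[OF finite_mats] card_mats[where 'a='a] by (metis
          mult_1_right)
    moreover have "card T \<noteq> 0" using \<open>finite T\<close> \<open>set_pmf ?A \<subseteq> T\<close> set_pmf_not_empty[of ?A] by auto
    ultimately show ?thesis by simp
  qed
  also have "log 2 (real (CARD('a) ^ (K - D + L))) = real (K - D + L) * log 2 (real CARD('a))"
    using card_field_ge_2[where 'a='a] by (simp add: log_nat_power)
  finally show ?thesis by (simp add: ennreal_leI)
qed

lemma scheme_rate:
  fixes \<alpha> :: "nat \<Rightarrow> 'a::{finite,field}"
  assumes "inj_on \<alpha> {0..<K}" "1 \<le> L" "L \<le> D" "D \<le> K"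
  shows "JPLT_II_rate K D L 1 \<rho> (scheme_query \<alpha> D L) (scheme_answer \<alpha> K D L)
    = ennreal (real L / real (K - D + L))"
proof -
  have lq: "0 < log 2 (real CARD('a))" using card_field_ge_2[where 'a='a] by simp
  have "entropy_pmf (map_pmf (\<lambda>(W, V, R, X). scheme_answer \<alpha> K D L (scheme_query \<alpha> D L W V R) X)
      (omega_II K D L 1 \<rho>)) = ennreal (real (K - D + L) * log 2 (real CARD('a)))"
  proof (rule antisym)
    show "ennreal (real (K - D + L) * log 2 (real CARD('a)))
      \<le> entropy_pmf (map_pmf (\<lambda>(W, V, R, X). scheme_answer \<alpha> K D L (scheme_query \<alpha> D L W V R) X)
        (omega_II K D L 1 \<rho>))"
      using JPLT_II_entropy_answer_ge[OF assms(2-4) scheme_JPLT_II_protocol[OF assms(1,3,4)]]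
      by (simp only: mult_1_right)
  qed (rule scheme_entropy_answer_le[OF assms(4)])
  then show ?thesis
    unfolding JPLT_II_rate_def using lq assms(2) by (simp add: divide_ennreal less_imp_neq[OF lq,
        symmetric])
qed

lemma inj_on_atLeastLessThan_exists:
  assumes "K \<le> CARD('a)"
  obtains \<alpha> :: "nat \<Rightarrow> 'a::finite" where "inj_on \<alpha> {0..<K}"
proof -
  obtain S :: "'a set" where "card S = K"
    using obtain_subset_with_card_n[of K "UNIV :: 'a set"] assms by auto
  moreover obtain \<alpha> where "bij_betw \<alpha> {0..<card S} S"
    using ex_bij_betw_nat_finite[of S] by auto
  ultimately show ?thesis using that unfolding bij_betw_def by blast
qed

theorem theorem2:
  fixes K D L :: nat
  assumes "1 \<le> L" and "L \<le> D" and "D \<le> K"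
  shows "(\<forall>N \<ge> 1. \<forall>(\<rho> :: 'r pmf)
            (qf :: nat set \<Rightarrow> (nat \<Rightarrow> nat \<Rightarrow> 'a::{finite,field}) \<Rightarrow> 'r \<Rightarrow> 'q)
            (af :: 'q \<Rightarrow> (nat \<Rightarrow> nat \<Rightarrow> 'a) \<Rightarrow> 'b).
            JPLT_II_protocol K D L N \<rho> qf af \<longrightarrow>
            JPLT_II_rate K D L N \<rho> qf af \<le> ennreal (real L / real (K - D + L)))
       \<and> (CARD('a) \<ge> K \<longrightarrow>
          (\<exists>N \<ge> 1. \<exists>(\<rho> :: nat pmf)
            (qf :: nat set \<Rightarrow> (nat \<Rightarrow> nat \<Rightarrow> 'a) \<Rightarrow> nat \<Rightarrow> nat)
            (af :: nat \<Rightarrow> (nat \<Rightarrow> nat \<Rightarrow> 'a) \<Rightarrow> nat).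
            JPLT_II_protocol K D L N \<rho> qf af \<and>
            JPLT_II_rate K D L N \<rho> qf af = ennreal (real L / real (K - D + L))))"
proof (intro conjI allI impI)
  fix N :: nat and \<rho> :: "'r pmf"
    and qf :: "nat set \<Rightarrow> (nat \<Rightarrow> nat \<Rightarrow> 'a) \<Rightarrow> 'r \<Rightarrow> 'q" and af :: "'q \<Rightarrow> (nat \<Rightarrow> nat \<Rightarrow> 'a) \<Rightarrow> 'b"
  assume "1 \<le> N" and "JPLT_II_protocol K D L N \<rho> qf af"
  then show "JPLT_II_rate K D L N \<rho> qf af \<le> ennreal (real L / real (K - D + L))"
    by (rule JPLT_II_rate_le[OF assms])
next
  assume "K \<le> CARD('a)"
  then obtain \<alpha> :: "nat \<Rightarrow> 'a" where "inj_on \<alpha> {0..<K}"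
    by (rule inj_on_atLeastLessThan_exists)
  from scheme_JPLT_II_protocol[OF this assms(2,3)] scheme_rate[OF this assms]
  show "\<exists>N \<ge> 1. \<exists>(\<rho> :: nat pmf) (qf :: nat set \<Rightarrow> (nat \<Rightarrow> nat \<Rightarrow> 'a) \<Rightarrow> nat \<Rightarrow> nat)
      (af :: nat \<Rightarrow> (nat \<Rightarrow> nat \<Rightarrow> 'a) \<Rightarrow> nat).
      JPLT_II_protocol K D L N \<rho> qf af \<and>
      JPLT_II_rate K D L N \<rho> qf af = ennreal (real L / real (K - D + L))"
    by blast
qed

end
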